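(* Let $R$ be an injective quasinormal operator on a Hilbert space $\tilde{\mathcal{H}}$, and let $R=N\oplus T\in\mathcal{B}(\mathcal{E}\oplus\mathcal{H})$ be its canonical decomposition into a normal operator $N\in\mathcal{B}(\mathcal{E})$ and a pure quasinormal operator $T\in\mathcal{B}(\mathcal{H})$. Let $\lambda\in\sigma_{ext}(R)$. Then \[E_{ext}(R,\lambda)=\left\{\begin{bmatrix}U&VU_T\\0&W\end{bmatrix}: U\in E_{ext}(N,\lambda),\ V\in E_{int}(N,A_T\otimes S,\lambda),\ W\in E_{ext}(T,\lambda)\right\},\] and $E_{int}(N,A_T\otimes S,\lambda)$ consists of the bounded operators $V=[V_0,V_1,\dots]\in\mathcal{B}(\bigoplus_{k\ge0}\mathfrak{L}_T,\mathcal{E})$ (row matrix form) such that $V_0\in\mathcal{A}_{|\lambda|}(N,A_T)$ and, for every $n\ge1$, $V_n$ is the unique bounded extension to $\mathfrak{L}_T$ of the operator $\mathrm{Im}A_T^n\to\mathcal{E}$, $A_T^nx\mapsto\lambda^{-n}N^nV_0x$.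
   Context: Quasinormal: $T|T|=|T|T$ with $|T|=(T^*T)^{1/2}$; pure: no nonzero reducing subspace on which the operator is normal. Every quasinormal operator splits (canonically) as an orthogonal direct sum of a normal part and a pure quasinormal part. For pure quasinormal $T$ with polar decomposition $T=V_T|T|$: $\mathfrak{L}_T=\mathcal{H}\ominus V_T\mathcal{H}$, $A_T=|T|\big|_{\mathfrak{L}_T}$ (injective positive), and $U_T:\mathcal{H}\to\mathfrak{L}_T\otimes H^2\cong\bigoplus_{k\ge0}\mathfrak{L}_T$ is a unitary with $A_T\otimes S=U_TTU_T^*$, $S$ the unilateral shift on $H^2$. $E_{ext}(T,\lambda)=\{X:TX=\lambda XT\}$, $E_{int}(A,B,\lambda)=\{X:AX=\lambda XB\}$, $\sigma_{ext}(R)$ is the set of $\lambda$ with $E_{ext}(R,\lambda)\ne\{0\}$. For $r>0$, $\mathcal{A}_r(N,A)=\{L\in\mathcal{B}(\mathfrak{L}_T,\mathcal{E}):\exists c\ge0,\ \|r^{-n}N^nLx\|\le c\|A^nx\|\ \forall x,\ \forall n\in\mathbb{N}\}$. *)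

theory Defs
  imports "HOL-Analysis.Analysis"
begin

class complex_vector = real_vector +
  fixes scaleC :: "complex \<Rightarrow> 'a \<Rightarrow> 'a" (infixr "*\<^sub>C" 75)
  assumes scaleR_scaleC: "scaleR r x = scaleC (complex_of_real r) x"
    and scaleC_add_right: "scaleC a (x + y) = scaleC a x + scaleC a y"
    and scaleC_add_left: "scaleC (a + b) x = scaleC a x + scaleC b x"
    and scaleC_scaleC: "scaleC a (scaleC b x) = scaleC (a * b) x"
    and scaleC_one: "scaleC 1 x = x"

class complex_inner = complex_vector + real_normed_vector +
  fixes cinner :: "'a \<Rightarrow> 'a \<Rightarrow> complex"
  assumes cinner_commute: "cinner x y = cnj (cinner y x)"
    and cinner_add_left: "cinner (x + y) z = cinner x z + cinner y z"
    and cinner_scaleC_left: "cinner (scaleC c x) y = cnj c * cinner x y"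
    and cinner_real: "Im (cinner x x) = 0"
    and cinner_ge_zero: "0 \<le> Re (cinner x x)"
    and cinner_eq_zero_iff: "cinner x x = 0 \<longleftrightarrow> x = 0"
    and norm_eq_sqrt_cinner: "norm x = sqrt (Re (cinner x x))"

class chilbert_space = complex_inner + complete_space


text \<open>Sanity check: the class is inhabited (the complex numbers form a complex Hilbert space).\<close>
instantiation complex :: complex_vector
begin
definition scaleC_complex_def: "scaleC a (x::complex) = a * x"
instance by standard (auto simp: scaleC_complex_def scaleR_conv_of_real algebra_simps)
end

instantiation complex :: complex_inner
begin
definition cinner_complex_def: "cinner (x::complex) y = cnj x * y"
instance
proof
  fix x y z :: complex and c :: complex
  show "cinner x y = cnj (cinner y x)" by (simp add: cinner_complex_def mult.commute)
  show "cinner (x + y) z = cinner x z + cinner y z" by (simp add: cinner_complex_def algebra_simps)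
  show "cinner (c *\<^sub>C x) y = cnj c * cinner x y" by (simp add: cinner_complex_def scaleC_complex_def)
  show "Im (cinner x x) = 0" by (simp add: cinner_complex_def)
  show "0 \<le> Re (cinner x x)" by (simp add: cinner_complex_def)
  show "(cinner x x = 0) = (x = 0)" by (simp add: cinner_complex_def)
  show "norm x = sqrt (Re (cinner x x))"
    by (simp add: cinner_complex_def cmod_def power2_eq_square)
qed
end

instance complex :: chilbert_space ..

definition closed_subspace :: "'a::chilbert_space set \<Rightarrow> bool" where
  "closed_subspace M \<longleftrightarrow> 0 \<in> M \<and> (\<forall>x\<in>M. \<forall>y\<in>M. x + y \<in> M)
     \<and> (\<forall>c. \<forall>x\<in>M. c *\<^sub>C x \<in> M) \<and> closed M"

definition orth_compl :: "'a::chilbert_space set \<Rightarrow> 'a set" where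
  "orth_compl M = {x. \<forall>y\<in>M. cinner x y = 0}"

definition lin_bdd_on :: "'a::chilbert_space set \<Rightarrow> 'b::chilbert_space set \<Rightarrow> ('a \<Rightarrow> 'b) \<Rightarrow> bool" where
  "lin_bdd_on D C f \<longleftrightarrow> (\<forall>x\<in>D. f x \<in> C)
     \<and> (\<forall>x\<in>D. \<forall>y\<in>D. f (x + y) = f x + f y)
     \<and> (\<forall>c. \<forall>x\<in>D. f (c *\<^sub>C x) = c *\<^sub>C f x)
     \<and> (\<exists>K. \<forall>x\<in>D. norm (f x) \<le> K * norm x)"

definition op_on :: "'a::chilbert_space set \<Rightarrow> ('a \<Rightarrow> 'a) \<Rightarrow> bool" where
  "op_on M f \<longleftrightarrow> lin_bdd_on M M f"

definition normal_on :: "'a::chilbert_space set \<Rightarrow> ('a \<Rightarrow> 'a) \<Rightarrow> bool" where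
  "normal_on M R \<longleftrightarrow> op_on M R \<and>
     (\<exists>S. op_on M S \<and> (\<forall>x\<in>M. \<forall>y\<in>M. cinner (R x) y = cinner x (S y))
          \<and> (\<forall>x\<in>M. R (S x) = S (R x)))"

text \<open>P is the modulus |T| = (T*T)^(1/2) of T in B(M): P is positive and P^2 = T*T,
the latter written as equality of the sesquilinear forms.\<close>
definition modulus_on :: "'a::chilbert_space set \<Rightarrow> ('a \<Rightarrow> 'a) \<Rightarrow> ('a \<Rightarrow> 'a) \<Rightarrow> bool" where
  "modulus_on M T P \<longleftrightarrow> op_on M P
     \<and> (\<forall>x\<in>M. \<forall>y\<in>M. cinner (P x) y = cinner x (P y))
     \<and> (\<forall>x\<in>M. 0 \<le> Re (cinner (P x) x))
     \<and> (\<forall>x\<in>M. \<forall>y\<in>M. cinner (P x) (P y) = cinner (T x) (T y))"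

definition quasinormal_on :: "'a::chilbert_space set \<Rightarrow> ('a \<Rightarrow> 'a) \<Rightarrow> bool" where
  "quasinormal_on M T \<longleftrightarrow> op_on M T \<and>
     (\<exists>P. modulus_on M T P \<and> (\<forall>x\<in>M. T (P x) = P (T x)))"

definition reduces :: "'a::chilbert_space set \<Rightarrow> ('a \<Rightarrow> 'a) \<Rightarrow> 'a set \<Rightarrow> bool" where
  "reduces M R M' \<longleftrightarrow> closed_subspace M' \<and> M' \<subseteq> M
     \<and> (\<forall>x\<in>M'. R x \<in> M') \<and> (\<forall>x\<in>M \<inter> orth_compl M'. R x \<in> M \<inter> orth_compl M')"

definition pure_on :: "'a::chilbert_space set \<Rightarrow> ('a \<Rightarrow> 'a) \<Rightarrow> bool" where
  "pure_on M R \<longleftrightarrow> \<not> (\<exists>M'. reduces M R M' \<and> M' \<noteq> {0} \<and> normal_on M' R)"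

text \<open>Canonical decomposition R = N \<oplus> T on E \<oplus> H (N = R on E normal, T = R on H pure).\<close>
definition canonical_decomp :: "('a::chilbert_space \<Rightarrow> 'a) \<Rightarrow> 'a set \<Rightarrow> 'a set \<Rightarrow> bool" where
  "canonical_decomp R E H \<longleftrightarrow> reduces UNIV R E \<and> H = orth_compl E
     \<and> normal_on E R \<and> pure_on H R"

definition polar_part_on :: "'a::chilbert_space set \<Rightarrow> ('a \<Rightarrow> 'a) \<Rightarrow> ('a \<Rightarrow> 'a) \<Rightarrow> ('a \<Rightarrow> 'a) \<Rightarrow> bool" where
  "polar_part_on M T P V \<longleftrightarrow> op_on M V \<and> (\<forall>x\<in>M. T x = V (P x))
     \<and> {x\<in>M. V x = 0} = {x\<in>M. P x = 0}"

definition Eext_on :: "'a::chilbert_space set \<Rightarrow> ('a \<Rightarrow> 'a) \<Rightarrow> complex \<Rightarrow> ('a \<Rightarrow> 'a) set" where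
  "Eext_on M R l = {X. op_on M X \<and> (\<forall>x\<in>M. R (X x) = l *\<^sub>C X (R x))}"

definition sigma_ext :: "('a::chilbert_space \<Rightarrow> 'a) \<Rightarrow> complex set" where
  "sigma_ext R = {l. Eext_on UNIV R l \<noteq> {\<lambda>x. 0}}"

section \<open>The space L \<otimes> H^2 = \<oplus>_{k\<ge>0} L (square-summable sequences in L)\<close>

definition l2seq :: "'a::chilbert_space set \<Rightarrow> (nat \<Rightarrow> 'a) set" where
  "l2seq L = {s. (\<forall>k. s k \<in> L) \<and> summable (\<lambda>k. (norm (s k))\<^sup>2)}"

definition l2norm :: "(nat \<Rightarrow> 'a::chilbert_space) \<Rightarrow> real" where
  "l2norm s = sqrt (\<Sum>k. (norm (s k))\<^sup>2)"

definition seq_add :: "(nat \<Rightarrow> 'a::chilbert_space) \<Rightarrow> (nat \<Rightarrow> 'a) \<Rightarrow> nat \<Rightarrow> 'a" where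
  "seq_add s t = (\<lambda>k. s k + t k)"

definition seq_scale :: "complex \<Rightarrow> (nat \<Rightarrow> 'a::chilbert_space) \<Rightarrow> nat \<Rightarrow> 'a" where
  "seq_scale c s = (\<lambda>k. c *\<^sub>C s k)"

definition bop_l2 :: "'a::chilbert_space set \<Rightarrow> 'a set \<Rightarrow> ((nat \<Rightarrow> 'a) \<Rightarrow> 'a) \<Rightarrow> bool" where
  "bop_l2 L C V \<longleftrightarrow> (\<forall>s\<in>l2seq L. V s \<in> C)
     \<and> (\<forall>s\<in>l2seq L. \<forall>t\<in>l2seq L. V (seq_add s t) = V s + V t)
     \<and> (\<forall>c. \<forall>s\<in>l2seq L. V (seq_scale c s) = c *\<^sub>C V s)
     \<and> (\<exists>K. \<forall>s\<in>l2seq L. norm (V s) \<le> K * l2norm s)"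

definition unitary_l2 :: "'a::chilbert_space set \<Rightarrow> 'a set \<Rightarrow> ('a \<Rightarrow> nat \<Rightarrow> 'a) \<Rightarrow> bool" where
  "unitary_l2 H L U \<longleftrightarrow> (\<forall>h\<in>H. U h \<in> l2seq L)
     \<and> (\<forall>x\<in>H. \<forall>y\<in>H. U (x + y) = seq_add (U x) (U y))
     \<and> (\<forall>c. \<forall>x\<in>H. U (c *\<^sub>C x) = seq_scale c (U x))
     \<and> (\<forall>h\<in>H. l2norm (U h) = norm h)
     \<and> (\<forall>s\<in>l2seq L. \<exists>h\<in>H. U h = s)"

text \<open>The operator A \<otimes> S (S the unilateral shift): (x_0, x_1, ...) \<mapsto> (0, A x_0, A x_1, ...).\<close>
definition tensorS :: "('a::chilbert_space \<Rightarrow> 'a) \<Rightarrow> (nat \<Rightarrow> 'a) \<Rightarrow> nat \<Rightarrow> 'a" where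
  "tensorS A s = (\<lambda>k. case k of 0 \<Rightarrow> 0 | Suc j \<Rightarrow> A (s j))"

definition Eint_l2 :: "'a::chilbert_space set \<Rightarrow> 'a set \<Rightarrow> ('a \<Rightarrow> 'a) \<Rightarrow> ('a \<Rightarrow> 'a) \<Rightarrow> complex
     \<Rightarrow> ((nat \<Rightarrow> 'a) \<Rightarrow> 'a) set" where
  "Eint_l2 E L N A l = {V. bop_l2 L E V \<and> (\<forall>s\<in>l2seq L. N (V s) = l *\<^sub>C V (tensorS A s))}"

text \<open>The n-th entry V_n of the row matrix [V_0, V_1, ...]: V_n x = V (0,...,0,x,0,...).\<close>
definition row_entry :: "((nat \<Rightarrow> 'a::chilbert_space) \<Rightarrow> 'a) \<Rightarrow> nat \<Rightarrow> 'a \<Rightarrow> 'a" where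
  "row_entry V n x = V (\<lambda>k. if k = n then x else 0)"

definition A_class :: "real \<Rightarrow> 'a set \<Rightarrow> 'a set \<Rightarrow> ('a::chilbert_space \<Rightarrow> 'a) \<Rightarrow> ('a \<Rightarrow> 'a)
     \<Rightarrow> ('a \<Rightarrow> 'a) set" where
  "A_class r L E N A = {F. lin_bdd_on L E F \<and> (\<exists>c\<ge>0. \<forall>x\<in>L. \<forall>n::nat.
      norm (((1 / r) ^ n) *\<^sub>R (N ^^ n) (F x)) \<le> c * norm ((A ^^ n) x))}"

end

theory Submission
  imports Defs
begin

text \<open>Split \<open>X \<in> E\<^sub>e\<^sub>x\<^sub>t(R, \<lambda>)\<close> into blocks along \<open>E \<oplus> H\<close>. The block from \<open>E\<close> to \<open>H\<close>
  vanishes: transported by \<open>U\<^sub>T\<close>, it sends the range of \<open>N\<^sup>n\<close> to sequences starting with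
  \<open>n\<close> zeros, and these ranges are dense because \<open>N\<close> is normal and injective. The block from
  \<open>H\<close> to \<open>E\<close> is \<open>V U\<^sub>T\<close> with \<open>V \<in> E\<^sub>i\<^sub>n\<^sub>t(N, A\<^sub>T \<otimes> S, \<lambda>)\<close>. For a row
  \<open>V = [V\<^sub>0, V\<^sub>1, \<dots>]\<close> the intertwining relation reads \<open>N V\<^sub>k = \<lambda> V\<^sub>k\<^sub>+\<^sub>1 A\<^sub>T\<close>,
  i.e. \<open>V\<^sub>n A\<^sub>T\<^sup>n = \<lambda>\<^sup>-\<^sup>n N\<^sup>n V\<^sub>0\<close>. Since \<open>A\<^sub>T\<close> is positive and injective, \<open>A\<^sub>T\<^sup>n\<close>
  has dense range; this yields the uniqueness of \<open>V\<^sub>n\<close>, and conversely the values of the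
  \<open>V\<^sub>n\<close> on these ranges give back the intertwining relation for the whole row by continuity.
  The bound defining \<open>\<A>\<^sub>|\<^sub>\<lambda>\<^sub>|\<close> is just the uniform bound \<open>\<parallel>V\<^sub>n\<parallel> \<le> \<parallel>V\<parallel>\<close>.\<close>

lemma cinner_add_right: "cinner x (y + z) = cinner x y + cinner x (z::'a::complex_inner)"
  by (metis cinner_add_left cinner_commute complex_cnj_add)

lemma cinner_scaleC_right: "cinner x (c *\<^sub>C y) = c * cinner x (y::'a::complex_inner)"
  by (metis cinner_commute cinner_scaleC_left complex_cnj_cnj complex_cnj_mult)

lemma scaleC_zero_left [simp]: "0 *\<^sub>C (x::'a::complex_vector) = 0"
  using scaleR_scaleC[of 0 x] by simp

lemma scaleC_zero_right [simp]: "c *\<^sub>C (0::'a::complex_vector) = 0"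
  by (metis add_cancel_right_right scaleC_add_right)

lemma scaleC_minus_one: "(-1) *\<^sub>C x = - (x::'a::complex_vector)"
  using scaleR_scaleC[of "-1" x] by simp

lemma scaleC_minus_right: "c *\<^sub>C (- x) = - (c *\<^sub>C (x::'a::complex_vector))"
  by (metis mult.commute scaleC_minus_one scaleC_scaleC)

lemma scaleC_diff_right: "c *\<^sub>C (x - y) = c *\<^sub>C x - c *\<^sub>C (y::'a::complex_vector)"
  using scaleC_add_right[of c x "-y"] scaleC_minus_right[of c y] by simp

lemma cinner_zero_left [simp]: "cinner 0 (y::'a::complex_inner) = 0"
  by (metis add.right_neutral add_cancel_right_right cinner_add_left)

lemma cinner_zero_right [simp]: "cinner (y::'a::complex_inner) 0 = 0"
  using cinner_commute[of y 0] by simp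

lemma cinner_diff_left: "cinner (x - z) (y::'a::complex_inner) = cinner x y - cinner z y"
  by (metis add_diff_cancel_right' cinner_add_left diff_add_cancel eq_diff_eq)

lemma cinner_diff_right: "cinner x (y - z::'a::complex_inner) = cinner x y - cinner x z"
  by (metis add_diff_cancel_right' cinner_add_right diff_add_cancel eq_diff_eq)

lemma power2_norm_eq_cinner: "(norm x)\<^sup>2 = Re (cinner x (x::'a::complex_inner))"
  by (simp add: norm_eq_sqrt_cinner cinner_ge_zero)

lemma cinner_self_eq_norm: "cinner x (x::'a::complex_inner) = complex_of_real ((norm x)\<^sup>2)"
  by (simp add: power2_norm_eq_cinner complex_eq_iff cinner_real)

lemma norm_scaleC: "norm (c *\<^sub>C (x::'a::complex_inner)) = cmod c * norm x"
proof -
  have "(norm (c *\<^sub>C x))\<^sup>2 = Re (cnj c * c * cinner x x)"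
    by (simp add: power2_norm_eq_cinner cinner_scaleC_left cinner_scaleC_right mult.assoc cinner_real)
  also have "cnj c * c = complex_of_real ((cmod c)\<^sup>2)"
    using complex_norm_square by (simp add: mult.commute)
  finally have "(norm (c *\<^sub>C x))\<^sup>2 = (cmod c * norm x)\<^sup>2"
    by (simp add: cinner_self_eq_norm power_mult_distrib)
  thus ?thesis by (simp add: power2_eq_iff_nonneg)
qed

lemma bounded_linear_scaleC: "bounded_linear (\<lambda>x::'a::complex_inner. c *\<^sub>C x)"
  by (rule bounded_linear_intro[where K = "cmod c"])
    (simp_all add: scaleC_add_right scaleR_scaleC scaleC_scaleC mult.commute norm_scaleC)

lemma tendsto_scaleC: "X \<longlonglongrightarrow> a \<Longrightarrow> (\<lambda>n. c *\<^sub>C X n) \<longlonglongrightarrow> c *\<^sub>C (a::'a::complex_inner)"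
  by (rule bounded_linear.tendsto[OF bounded_linear_scaleC])

lemma power2_norm_add:
  "(norm (x + y))\<^sup>2 = (norm x)\<^sup>2 + 2 * Re (cinner x y) + (norm (y::'a::complex_inner))\<^sup>2"
proof -
  have "Re (cinner y x) = Re (cinner x y)" by (subst cinner_commute) simp
  thus ?thesis by (simp add: power2_norm_eq_cinner cinner_add_left cinner_add_right)
qed

lemma power2_norm_diff:
  "(norm (x - y))\<^sup>2 = (norm x)\<^sup>2 - 2 * Re (cinner x y) + (norm (y::'a::complex_inner))\<^sup>2"
proof -
  have "Re (cinner y x) = Re (cinner x y)" by (subst cinner_commute) simp
  thus ?thesis by (simp add: power2_norm_eq_cinner cinner_diff_left cinner_diff_right)
qed

lemma parallelogram_law:
  "(norm (x + y))\<^sup>2 + (norm (x - y))\<^sup>2 = 2 * (norm x)\<^sup>2 + 2 * (norm (y::'a::complex_inner))\<^sup>2"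
  by (simp add: power2_norm_add power2_norm_diff)

lemma Re_cinner_polarization:
  "Re (cinner x y) = ((norm (x + y))\<^sup>2 - (norm (x - (y::'a::complex_inner)))\<^sup>2) / 4"
  by (simp add: power2_norm_add power2_norm_diff)

lemma tendsto_cinner_left:
  assumes "X \<longlonglongrightarrow> (a::'a::complex_inner)"
  shows "(\<lambda>n. cinner (X n) y) \<longlonglongrightarrow> cinner a y"
proof -
  have Re_lim: "(\<lambda>n. Re (cinner (Z n) y)) \<longlonglongrightarrow> Re (cinner b y)" if "Z \<longlonglongrightarrow> b" for Z b
    unfolding Re_cinner_polarization by (intro tendsto_intros that) simp
  from Re_lim[OF tendsto_scaleC[OF assms, of \<i>]] have "(\<lambda>n. Im (cinner (X n) y)) \<longlonglongrightarrow> Im (cinner a y)"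
    by (simp add: cinner_scaleC_left)
  with Re_lim[OF assms] show ?thesis by (simp add: tendsto_complex_iff)
qed


section \<open>Subspaces and orthogonal projection\<close>

definition complex_subspace :: "'a::complex_vector set \<Rightarrow> bool" where
  "complex_subspace M \<longleftrightarrow> 0 \<in> M \<and> (\<forall>x\<in>M. \<forall>y\<in>M. x + y \<in> M) \<and> (\<forall>c. \<forall>x\<in>M. c *\<^sub>C x \<in> M)"

lemma closed_subspace_iff: "closed_subspace M \<longleftrightarrow> complex_subspace M \<and> closed M"
  unfolding closed_subspace_def complex_subspace_def by auto

lemma closed_subspace_imp_subspace: "closed_subspace M \<Longrightarrow> complex_subspace M"
  by (simp add: closed_subspace_iff)

lemma complex_subspace_0: "complex_subspace M \<Longrightarrow> 0 \<in> M"
  by (simp add: complex_subspace_def)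

lemma complex_subspace_add: "complex_subspace M \<Longrightarrow> x \<in> M \<Longrightarrow> y \<in> M \<Longrightarrow> x + y \<in> M"
  by (simp add: complex_subspace_def)

lemma complex_subspace_scaleC: "complex_subspace M \<Longrightarrow> x \<in> M \<Longrightarrow> c *\<^sub>C x \<in> M"
  by (simp add: complex_subspace_def)

lemma complex_subspace_diff: "complex_subspace M \<Longrightarrow> x \<in> M \<Longrightarrow> y \<in> M \<Longrightarrow> x - y \<in> M"
  by (metis complex_subspace_add complex_subspace_scaleC diff_conv_add_uminus scaleC_minus_one)

lemma complex_subspace_scaleR: "complex_subspace M \<Longrightarrow> x \<in> M \<Longrightarrow> r *\<^sub>R x \<in> M"
  by (metis scaleR_scaleC complex_subspace_scaleC)

lemma complex_subspace_orth_compl: "complex_subspace (orth_compl S)"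
  unfolding complex_subspace_def orth_compl_def by (simp add: cinner_add_left cinner_scaleC_left)

lemma closed_orth_compl: "closed (orth_compl (S::'a::chilbert_space set))"
  unfolding closed_sequential_limits
proof (intro allI impI, elim conjE)
  fix X and a :: 'a
  assume X: "\<forall>n. X n \<in> orth_compl S" and lim: "X \<longlonglongrightarrow> a"
  have "cinner a y = 0" if "y \<in> S" for y
  proof -
    have "(\<lambda>n. cinner (X n) y) = (\<lambda>n. 0)" using X that by (simp add: orth_compl_def)
    with tendsto_cinner_left[OF lim, of y] have "(\<lambda>n. 0) \<longlonglongrightarrow> cinner a y" by simp
    thus ?thesis using LIMSEQ_unique[OF tendsto_const] by metis
  qed
  thus "a \<in> orth_compl S" by (simp add: orth_compl_def)
qed

lemma closed_subspace_orth_compl: "closed_subspace (orth_compl (S::'a::chilbert_space set))"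
  by (simp add: closed_subspace_iff complex_subspace_orth_compl closed_orth_compl)

lemma closed_subspace_Int: "closed_subspace A \<Longrightarrow> closed_subspace B \<Longrightarrow> closed_subspace (A \<inter> B)"
  unfolding closed_subspace_def by auto

lemma orth_compl_cinner_left: "x \<in> orth_compl M \<Longrightarrow> y \<in> M \<Longrightarrow> cinner y x = 0"
  using cinner_commute[of y x] by (simp add: orth_compl_def)

lemma Re_cinner_eq_0_if_nearest:
  fixes z w :: "'a::complex_inner"
  assumes "\<And>t::real. (norm z)\<^sup>2 \<le> (norm (z - t *\<^sub>R w))\<^sup>2"
  shows "Re (cinner z w) = 0"
proof -
  define a where "a = Re (cinner z w)"
  define b where "b = (norm w)\<^sup>2"
  have b: "b \<ge> 0" by (simp add: b_def)
  have key: "0 \<le> - 2 * t * a + t\<^sup>2 * b" for t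
    using assms[of t]
    by (simp add: power2_norm_diff a_def b_def power_mult_distrib scaleR_scaleC cinner_scaleC_right
        norm_scaleC)
  define t where "t = a / (b + 1)"
  have "t\<^sup>2 * b \<le> t\<^sup>2 * (b + 1)" by (simp add: mult_left_mono)
  also have "\<dots> = t * a" using b by (simp add: t_def power2_eq_square)
  finally have "a * a / (b + 1) \<le> 0" using key[of t] by (simp add: t_def)
  hence "a * a \<le> 0" using b by (simp add: divide_le_0_iff add_nonneg_pos)
  hence "a = 0" using zero_le_square[of a] by simp
  thus ?thesis unfolding a_def by simp
qed

lemma orth_compl_if_nearest:
  fixes z :: "'a::chilbert_space"
  assumes M: "complex_subspace M" and nearest: "\<forall>w\<in>M. norm z \<le> norm (z - w)"
  shows "z \<in> orth_compl M"
proof -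
  have Re0: "Re (cinner z w) = 0" if "w \<in> M" for w
  proof (rule Re_cinner_eq_0_if_nearest)
    fix t :: real
    show "(norm z)\<^sup>2 \<le> (norm (z - t *\<^sub>R w))\<^sup>2"
      using nearest complex_subspace_scaleR[OF M that] by (simp add: power_mono)
  qed
  have "cinner z y = 0" if "y \<in> M" for y
    using Re0[OF that] Re0[OF complex_subspace_scaleC[OF M that, of \<i>]]
    by (simp add: cinner_scaleC_right complex_eq_iff)
  thus ?thesis by (simp add: orth_compl_def)
qed

lemma power2_norm_diff_le_near_infimum:
  fixes x :: "'a::complex_inner"
  assumes M: "complex_subspace M" and d: "d \<ge> 0" "\<forall>m\<in>M. d \<le> norm (x - m)"
    and a: "a \<in> M" and b: "b \<in> M"
  shows "(norm (a - b))\<^sup>2 \<le> 2 * ((norm (x - a))\<^sup>2 - d\<^sup>2) + 2 * ((norm (x - b))\<^sup>2 - d\<^sup>2)"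
proof -
  have "(1/2::real) *\<^sub>R (a + b) \<in> M"
    by (intro complex_subspace_scaleR complex_subspace_add M a b)
  with d have "d\<^sup>2 \<le> (norm (x - (1/2::real) *\<^sub>R (a + b)))\<^sup>2" by (simp add: power_mono)
  also have "(x - a) + (x - b) = 2 *\<^sub>R (x - (1/2::real) *\<^sub>R (a + b))"
    by (simp add: algebra_simps scaleR_2)
  hence "(norm (x - (1/2::real) *\<^sub>R (a + b)))\<^sup>2 = (norm ((x - a) + (x - b)))\<^sup>2 / 4"
    by (simp add: power_mult_distrib)
  finally show ?thesis
    using parallelogram_law[of "x - a" "x - b"] by (simp add: norm_minus_commute)
qed

lemma Cauchy_minimizing_sequence:
  fixes x :: "'a::complex_inner"
  assumes M: "complex_subspace M" and d: "d \<ge> 0" "\<forall>m\<in>M. d \<le> norm (x - m)"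
    and ms: "\<And>j. ms j \<in> M" "\<And>j. (norm (x - ms j))\<^sup>2 < d\<^sup>2 + 1 / Suc j"
  shows "Cauchy ms"
proof (rule metric_CauchyI)
  fix e :: real assume "e > 0"
  obtain N :: nat where N: "4 / e\<^sup>2 < N" using reals_Archimedean2 by blast
  have "dist (ms i) (ms j) < e" if "i \<ge> N" "j \<ge> N" for i j
  proof -
    have "1 / real (Suc i) \<le> 1 / Suc N" "1 / real (Suc j) \<le> 1 / Suc N"
      using that by (simp_all add: frac_le)
    with power2_norm_diff_le_near_infimum[OF M d ms(1) ms(1), of i j] ms(2)[of i] ms(2)[of j]
    have "(norm (ms i - ms j))\<^sup>2 < 4 * (1 / Suc N)" by argo
    also have "\<dots> < e\<^sup>2"
      using N \<open>e > 0\<close> by (simp add: field_simps) (smt (verit) zero_less_power)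
    finally have "(dist (ms i) (ms j))\<^sup>2 < e\<^sup>2" by (simp add: dist_norm)
    thus ?thesis by (rule power_less_imp_less_base) (use \<open>e > 0\<close> in simp)
  qed
  thus "\<exists>N. \<forall>i\<ge>N. \<forall>j\<ge>N. dist (ms i) (ms j) < e" by blast
qed

lemma nearest_point_exists:
  fixes x :: "'a::chilbert_space"
  assumes "closed_subspace M"
  obtains m where "m \<in> M" "\<forall>w\<in>M. norm (x - m) \<le> norm (x - w)"
proof -
  have M: "complex_subspace M" and "closed M" using assms by (auto simp: closed_subspace_iff)
  define D where "D = (\<lambda>m. norm (x - m)) ` M"
  define d where "d = Inf D"
  have D_ne: "D \<noteq> {}" using complex_subspace_0[OF M] by (auto simp: D_def)
  have bdd: "bdd_below D" unfolding D_def by (rule bdd_belowI[of _ 0]) auto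
  have d_le: "\<forall>m\<in>M. d \<le> norm (x - m)"
    unfolding d_def using bdd by (auto simp: D_def intro: cInf_lower)
  have d0: "0 \<le> d" unfolding d_def using D_ne by (auto simp: D_def intro!: cInf_greatest)
  have "\<exists>m\<in>M. (norm (x - m))\<^sup>2 < d\<^sup>2 + 1 / Suc j" for j
  proof -
    have "d < sqrt (d\<^sup>2 + 1 / Suc j)" by (intro real_less_rsqrt) simp
    then obtain m where m: "m \<in> M" "norm (x - m) < sqrt (d\<^sup>2 + 1 / Suc j)"
      using cInf_less_iff[OF D_ne bdd] unfolding d_def D_def by blast
    hence "(norm (x - m))\<^sup>2 < (sqrt (d\<^sup>2 + 1 / Suc j))\<^sup>2" by (intro power_strict_mono) auto
    with m(1) show ?thesis by auto
  qed
  then obtain ms where ms: "\<And>j. ms j \<in> M" "\<And>j. (norm (x - ms j))\<^sup>2 < d\<^sup>2 + 1 / Suc j"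
    by metis
  have "Cauchy ms" by (rule Cauchy_minimizing_sequence[OF M d0 d_le ms])
  then obtain m where lim: "ms \<longlonglongrightarrow> m" using Cauchy_convergent convergent_def by blast
  have "m \<in> M" using \<open>closed M\<close> ms(1) lim closed_sequentially by blast
  have lim_norm: "(\<lambda>j. (norm (x - ms j))\<^sup>2) \<longlonglongrightarrow> (norm (x - m))\<^sup>2"
    by (intro tendsto_intros lim)
  have lim_bound: "(\<lambda>j. d\<^sup>2 + 1 / real (Suc j)) \<longlonglongrightarrow> d\<^sup>2 + 0"
    by (intro tendsto_add tendsto_const LIMSEQ_inverse_real_of_nat[unfolded inverse_eq_divide])
  have "\<forall>j. (norm (x - ms j))\<^sup>2 \<le> d\<^sup>2 + 1 / real (Suc j)"
    using ms(2) less_imp_le by meson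
  hence "(norm (x - m))\<^sup>2 \<le> d\<^sup>2 + 0"
    by (intro LIMSEQ_le[OF lim_norm lim_bound] exI[of _ 0] allI impI) (rule spec)
  hence "norm (x - m) \<le> d" using d0 power2_le_imp_le[of "norm (x - m)" d] by simp
  hence "\<forall>w\<in>M. norm (x - m) \<le> norm (x - w)" using d_le by (meson order_trans)
  with \<open>m \<in> M\<close> show ?thesis by (rule that)
qed

definition proj :: "'a::chilbert_space set \<Rightarrow> 'a \<Rightarrow> 'a" where
  "proj M x = (SOME m. m \<in> M \<and> x - m \<in> orth_compl M)"

lemma proj:
  assumes "closed_subspace M"
  shows proj_in: "proj M x \<in> M" and proj_diff_in_orth_compl: "x - proj M x \<in> orth_compl M"
proof -
  obtain m where m: "m \<in> M" "\<forall>w\<in>M. norm (x - m) \<le> norm (x - w)"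
    using nearest_point_exists[OF assms] by blast
  have "x - m \<in> orth_compl M"
  proof (rule orth_compl_if_nearest)
    show "complex_subspace M" using assms by (rule closed_subspace_imp_subspace)
    show "\<forall>w\<in>M. norm (x - m) \<le> norm (x - m - w)"
      using m complex_subspace_add[OF closed_subspace_imp_subspace[OF assms] m(1)]
      by (simp add: diff_diff_eq)
  qed
  with m(1) have "\<exists>m. m \<in> M \<and> x - m \<in> orth_compl M" by blast
  hence "proj M x \<in> M \<and> x - proj M x \<in> orth_compl M"
    unfolding proj_def by (rule someI_ex)
  thus "proj M x \<in> M" "x - proj M x \<in> orth_compl M" by auto
qed

lemma proj_unique:
  assumes M: "closed_subspace M" and m: "m \<in> M" "x - m \<in> orth_compl M"
  shows "proj M x = m"
proof -
  have "proj M x - m \<in> M"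
    using complex_subspace_diff[OF closed_subspace_imp_subspace[OF M] proj_in[OF M] m(1)] .
  moreover have "proj M x - m \<in> orth_compl M"
    using complex_subspace_diff[OF complex_subspace_orth_compl m(2) proj_diff_in_orth_compl[OF M, of x]]
    by simp
  ultimately have "cinner (proj M x - m) (proj M x - m) = 0" by (simp add: orth_compl_def)
  thus ?thesis by (simp add: cinner_eq_zero_iff)
qed

lemma proj_add:
  assumes M: "closed_subspace M"
  shows "proj M (x + y) = proj M x + proj M y"
proof (rule proj_unique[OF M])
  have S: "complex_subspace M" using M by (rule closed_subspace_imp_subspace)
  show "proj M x + proj M y \<in> M" by (intro complex_subspace_add S proj_in M)
  have "(x - proj M x) + (y - proj M y) \<in> orth_compl M"
    by (intro complex_subspace_add complex_subspace_orth_compl proj_diff_in_orth_compl M)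
  thus "x + y - (proj M x + proj M y) \<in> orth_compl M" by (simp add: algebra_simps)
qed

lemma proj_scaleC:
  assumes M: "closed_subspace M"
  shows "proj M (c *\<^sub>C x) = c *\<^sub>C proj M x"
proof (rule proj_unique[OF M])
  show "c *\<^sub>C proj M x \<in> M"
    by (intro complex_subspace_scaleC closed_subspace_imp_subspace proj_in M)
  have "c *\<^sub>C (x - proj M x) \<in> orth_compl M"
    by (intro complex_subspace_scaleC complex_subspace_orth_compl proj_diff_in_orth_compl M)
  thus "c *\<^sub>C x - c *\<^sub>C proj M x \<in> orth_compl M" by (simp add: scaleC_diff_right)
qed

lemma proj_pythagoras:
  assumes "closed_subspace M"
  shows "(norm x)\<^sup>2 = (norm (proj M x))\<^sup>2 + (norm (x - proj M x))\<^sup>2"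
proof -
  have "cinner (proj M x) (x - proj M x) = 0"
    using assms proj_in proj_diff_in_orth_compl orth_compl_cinner_left by blast
  moreover have "proj M x + (x - proj M x) = x" by simp
  ultimately show ?thesis using power2_norm_add[of "proj M x" "x - proj M x"] by simp
qed

lemma norm_proj_le:
  assumes "closed_subspace M"
  shows "norm (proj M x) \<le> norm x"
proof -
  have "(norm (proj M x))\<^sup>2 \<le> (norm x)\<^sup>2" using proj_pythagoras[OF assms, of x] by simp
  thus ?thesis by (rule power2_le_imp_le) simp
qed

lemma norm_diff_proj_le:
  assumes "closed_subspace M"
  shows "norm (x - proj M x) \<le> norm x"
proof -
  have "(norm (x - proj M x))\<^sup>2 \<le> (norm x)\<^sup>2" using proj_pythagoras[OF assms, of x] by simp
  thus ?thesis by (rule power2_le_imp_le) simp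
qed

lemma lin_bdd_onD:
  assumes "lin_bdd_on D C f"
  shows lin_bdd_on_in: "x \<in> D \<Longrightarrow> f x \<in> C"
    and lin_bdd_on_add: "x \<in> D \<Longrightarrow> y \<in> D \<Longrightarrow> f (x + y) = f x + f y"
    and lin_bdd_on_scaleC: "x \<in> D \<Longrightarrow> f (c *\<^sub>C x) = c *\<^sub>C f x"
    and lin_bdd_on_bounded: "\<exists>K. \<forall>x\<in>D. norm (f x) \<le> K * norm x"
  using assms unfolding lin_bdd_on_def by blast+

lemma lin_bdd_on_nonneg_bound:
  assumes "lin_bdd_on D C f"
  obtains K where "K \<ge> 0" "\<And>x. x \<in> D \<Longrightarrow> norm (f x) \<le> K * norm x"
proof -
  obtain K where K: "\<forall>x\<in>D. norm (f x) \<le> K * norm x" using lin_bdd_on_bounded[OF assms] by blast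
  have "norm (f x) \<le> max K 0 * norm x" if "x \<in> D" for x
    using K that by (meson max.cobounded1 mult_right_mono norm_ge_zero order_trans)
  thus ?thesis using that[of "max K 0"] by simp
qed

lemma lin_bdd_on_zero: "lin_bdd_on D C f \<Longrightarrow> complex_subspace D \<Longrightarrow> f 0 = 0"
  using lin_bdd_on_scaleC[of D C f 0 0] complex_subspace_0 by auto

lemma lin_bdd_on_diff:
  assumes "lin_bdd_on D C f" "complex_subspace D" "x \<in> D" "y \<in> D"
  shows "f (x - y) = f x - f y"
proof -
  have "f (x - y) + f y = f x"
    using lin_bdd_on_add[OF assms(1) complex_subspace_diff[OF assms(2-4)] assms(4)] by simp
  thus ?thesis by (simp add: eq_diff_eq)
qed

lemma lin_bdd_on_restrict:
  "lin_bdd_on D C f \<Longrightarrow> D' \<subseteq> D \<Longrightarrow> (\<And>x. x \<in> D' \<Longrightarrow> f x \<in> C') \<Longrightarrow> lin_bdd_on D' C' f"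
  unfolding lin_bdd_on_def by blast

lemma lin_bdd_on_into_UNIV: "lin_bdd_on D C f \<Longrightarrow> lin_bdd_on D UNIV f"
  unfolding lin_bdd_on_def by blast

lemma lin_bdd_on_comp:
  assumes f: "lin_bdd_on D C f" and g: "lin_bdd_on C B g"
  shows "lin_bdd_on D B (\<lambda>x. g (f x))"
proof -
  obtain K where K: "\<And>x. x \<in> D \<Longrightarrow> norm (f x) \<le> K * norm x"
    using lin_bdd_on_nonneg_bound[OF f] by blast
  obtain K' where "K' \<ge> 0" and K': "\<And>x. x \<in> C \<Longrightarrow> norm (g x) \<le> K' * norm x"
    using lin_bdd_on_nonneg_bound[OF g] by blast
  have "norm (g (f x)) \<le> (K' * K) * norm x" if "x \<in> D" for x
    using K'[OF lin_bdd_on_in[OF f that]] mult_left_mono[OF K[OF that] \<open>K' \<ge> 0\<close>]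
    by (simp add: mult.assoc)
  with f g show ?thesis unfolding lin_bdd_on_def by auto
qed

lemma lin_bdd_on_funpow: "lin_bdd_on M M T \<Longrightarrow> lin_bdd_on M M (T ^^ n)"
proof (induction n)
  case 0
  show ?case unfolding lin_bdd_on_def by (auto intro: exI[of _ 1])
next
  case (Suc n)
  then show ?case using lin_bdd_on_comp[of M M "T ^^ n" M T] by simp
qed

lemma lin_bdd_on_add_fun:
  assumes "lin_bdd_on D C f" "lin_bdd_on D C g" "complex_subspace C"
  shows "lin_bdd_on D C (\<lambda>x. f x + g x)"
proof -
  obtain K where K: "\<And>x. x \<in> D \<Longrightarrow> norm (f x) \<le> K * norm x"
    using lin_bdd_on_nonneg_bound[OF assms(1)] by blast
  obtain K' where K': "\<And>x. x \<in> D \<Longrightarrow> norm (g x) \<le> K' * norm x"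
    using lin_bdd_on_nonneg_bound[OF assms(2)] by blast
  have "norm (f x + g x) \<le> (K + K') * norm x" if "x \<in> D" for x
    using norm_triangle_ineq[of "f x" "g x"] K[OF that] K'[OF that] by (simp add: distrib_right)
  with assms show ?thesis unfolding lin_bdd_on_def
    by (intro conjI ballI allI exI[of _ "K + K'"])
      (auto simp: scaleC_add_right complex_subspace_add algebra_simps)
qed

lemma lin_bdd_on_diff_fun:
  assumes "lin_bdd_on D C f" "lin_bdd_on D C g" "complex_subspace C"
  shows "lin_bdd_on D C (\<lambda>x. f x - g x)"
proof -
  have "lin_bdd_on D C (\<lambda>x. (-1) *\<^sub>C g x)"
    using assms(2,3) unfolding lin_bdd_on_def
    by (auto simp: scaleC_add_right scaleC_scaleC norm_scaleC mult.commute complex_subspace_scaleC)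
  from lin_bdd_on_add_fun[OF assms(1) this assms(3)] show ?thesis by (simp add: scaleC_minus_one)
qed

lemma bounded_linear_if_lin_bdd_on_UNIV:
  assumes "lin_bdd_on UNIV UNIV f"
  shows "bounded_linear f"
proof -
  obtain K where "\<forall>x. norm (f x) \<le> K * norm x" using lin_bdd_on_bounded[OF assms] by blast
  with assms show ?thesis
    by (intro bounded_linear_intro[where K = K])
      (simp_all add: lin_bdd_on_add lin_bdd_on_scaleC scaleR_scaleC mult.commute)
qed

lemma lin_bdd_on_UNIV_scaleC: "lin_bdd_on UNIV UNIV (\<lambda>x::'a::chilbert_space. c *\<^sub>C x)"
  unfolding lin_bdd_on_def
  by (auto simp: scaleC_add_right scaleC_scaleC mult.commute norm_scaleC intro: exI[of _ "cmod c"])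

lemma lin_bdd_on_proj: "closed_subspace M \<Longrightarrow> lin_bdd_on UNIV M (proj M)"
  unfolding lin_bdd_on_def
  by (auto simp: proj_in proj_add proj_scaleC norm_proj_le intro: exI[of _ 1])

lemma lin_bdd_on_proj_orth_compl:
  "closed_subspace M \<Longrightarrow> lin_bdd_on UNIV (orth_compl M) (\<lambda>x. x - proj M x)"
  unfolding lin_bdd_on_def
  by (auto simp: proj_diff_in_orth_compl proj_add proj_scaleC norm_diff_proj_le scaleC_diff_right
      intro: exI[of _ 1])

lemma complex_subspace_image:
  assumes "complex_subspace M" "lin_bdd_on M C T"
  shows "complex_subspace (T ` M)"
  unfolding complex_subspace_def
proof (intro conjI ballI allI)
  show "0 \<in> T ` M"
    using assms lin_bdd_on_zero complex_subspace_0 by (metis image_eqI)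
  show "a + b \<in> T ` M" if "a \<in> T ` M" "b \<in> T ` M" for a b
    using that assms by (auto simp flip: lin_bdd_on_add[OF assms(2)] intro: complex_subspace_add)
  show "c *\<^sub>C a \<in> T ` M" if "a \<in> T ` M" for c a
    using that assms by (auto simp flip: lin_bdd_on_scaleC[OF assms(2)] intro: complex_subspace_scaleC)
qed

lemma complex_subspace_closure:
  assumes D: "complex_subspace (D::'a::chilbert_space set)"
  shows "complex_subspace (closure D)"
  unfolding complex_subspace_def
proof (intro conjI ballI allI)
  show "0 \<in> closure D" using complex_subspace_0[OF D] closure_subset by blast
  fix x y assume "x \<in> closure D" "y \<in> closure D"
  then obtain X Y where "\<forall>n. X n \<in> D" "X \<longlonglongrightarrow> x" "\<forall>n. Y n \<in> D" "Y \<longlonglongrightarrow> y"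
    unfolding closure_sequential by blast
  with D show "x + y \<in> closure D" unfolding closure_sequential
    by (intro exI[of _ "\<lambda>n. X n + Y n"]) (auto intro: tendsto_add complex_subspace_add)
next
  fix c and x assume "x \<in> closure D"
  then obtain X where X: "\<forall>n. X n \<in> D" "X \<longlonglongrightarrow> x" unfolding closure_sequential by blast
  from X(1) tendsto_scaleC[OF X(2)] D show "c *\<^sub>C x \<in> closure D" unfolding closure_sequential
    by (intro exI[of _ "\<lambda>n. c *\<^sub>C X n"]) (auto intro: complex_subspace_scaleC)
qed

lemma dense_if_orth_compl_trivial:
  fixes M :: "'a::chilbert_space set"
  assumes M: "closed_subspace M" and D: "complex_subspace D" "D \<subseteq> M"
    and trivial: "\<And>k. k \<in> M \<Longrightarrow> (\<forall>d\<in>D. cinner d k = 0) \<Longrightarrow> k = 0"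
  shows "M \<subseteq> closure D"
proof
  fix x assume x: "x \<in> M"
  have cD: "closed_subspace (closure D)"
    using complex_subspace_closure[OF D(1)] closed_subspace_iff by blast
  have "closure D \<subseteq> M" using M D(2) closure_minimal closed_subspace_iff by blast
  hence "x - proj (closure D) x \<in> M"
    using x proj_in[OF cD] complex_subspace_diff closed_subspace_imp_subspace[OF M] by blast
  moreover have "\<forall>d\<in>D. cinner d (x - proj (closure D) x) = 0"
    using proj_diff_in_orth_compl[OF cD] closure_subset orth_compl_cinner_left by blast
  ultimately have "x - proj (closure D) x = 0" by (rule trivial)
  thus "x \<in> closure D" using proj_in[OF cD, of x] by (simp add: right_minus_eq)
qed

lemma lin_bdd_on_eq_0_if_eq_0_on_dense:
  fixes f :: "'a::chilbert_space \<Rightarrow> 'b::chilbert_space"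
  assumes f: "lin_bdd_on M C f" and M: "complex_subspace M" and D: "D \<subseteq> M" "M \<subseteq> closure D"
    and zero: "\<And>d. d \<in> D \<Longrightarrow> f d = 0" and x: "x \<in> M"
  shows "f x = 0"
proof -
  obtain K where K: "\<And>x. x \<in> M \<Longrightarrow> norm (f x) \<le> K * norm x"
    using lin_bdd_on_nonneg_bound[OF f] by blast
  obtain X where X: "\<forall>n. X n \<in> D" "X \<longlonglongrightarrow> x" using D(2) x closure_sequential by blast
  have "norm (f x) \<le> K * norm (x - X n)" for n
  proof -
    have "X n \<in> M" using X(1) D(1) by blast
    hence "f x = f (x - X n)" using lin_bdd_on_diff[OF f M x] zero X(1) by simp
    thus ?thesis using K complex_subspace_diff[OF M x \<open>X n \<in> M\<close>] by simp
  qed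
  moreover have "(\<lambda>n. K * norm (x - X n)) \<longlonglongrightarrow> K * norm (x - x)"
    by (intro tendsto_intros X(2))
  ultimately have "norm (f x) \<le> K * norm (x - x)"
    using LIMSEQ_le_const by blast
  thus ?thesis by simp
qed

lemma funpow_in: "(\<And>x. x \<in> M \<Longrightarrow> T x \<in> M) \<Longrightarrow> x \<in> M \<Longrightarrow> (T ^^ n) x \<in> M"
  by (induction n) auto

lemma funpow_adjoint:
  assumes T: "\<And>x. x \<in> M \<Longrightarrow> T x \<in> M" and B: "\<And>x. x \<in> M \<Longrightarrow> B x \<in> M"
    and adj: "\<And>x y. x \<in> M \<Longrightarrow> y \<in> M \<Longrightarrow> cinner (T x) y = cinner x (B y)"
    and "x \<in> M" "y \<in> M"
  shows "cinner ((T ^^ n) x) y = cinner x ((B ^^ n) y)"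
  using assms(5)
proof (induction n arbitrary: y)
  case (Suc n)
  have "cinner ((T ^^ Suc n) x) y = cinner ((T ^^ n) x) (B y)"
    using adj funpow_in[OF T \<open>x \<in> M\<close>] Suc.prems by simp
  also have "\<dots> = cinner x ((B ^^ Suc n) y)"
    using Suc.IH[OF B[OF Suc.prems]] by (simp add: funpow_swap1)
  finally show ?case .
qed simp

lemma funpow_eq_0_imp_eq_0:
  assumes T: "\<And>x. x \<in> M \<Longrightarrow> T x \<in> M" and inj: "\<And>x. x \<in> M \<Longrightarrow> T x = 0 \<Longrightarrow> x = 0"
  shows "x \<in> M \<Longrightarrow> (T ^^ n) x = 0 \<Longrightarrow> x = 0"
proof (induction n arbitrary: x)
  case (Suc n)
  thus ?case using T inj by (simp add: funpow_swap1)
qed simp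

lemma dense_range_funpow_if_adjoint_injective:
  fixes M :: "'a::chilbert_space set"
  assumes M: "closed_subspace M" and T: "lin_bdd_on M M T"
    and B: "\<And>x. x \<in> M \<Longrightarrow> B x \<in> M"
    and adj: "\<And>x y. x \<in> M \<Longrightarrow> y \<in> M \<Longrightarrow> cinner (T x) y = cinner x (B y)"
    and inj: "\<And>x. x \<in> M \<Longrightarrow> B x = 0 \<Longrightarrow> x = 0"
  shows "M \<subseteq> closure ((T ^^ n) ` M)"
proof (rule dense_if_orth_compl_trivial[OF M])
  have Tn: "lin_bdd_on M M (T ^^ n)" by (rule lin_bdd_on_funpow[OF T])
  show "complex_subspace ((T ^^ n) ` M)"
    by (rule complex_subspace_image[OF closed_subspace_imp_subspace[OF M] Tn])
  show "(T ^^ n) ` M \<subseteq> M" using lin_bdd_on_in[OF Tn] by blast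
  fix k assume k: "k \<in> M" and orth: "\<forall>d\<in>(T ^^ n) ` M. cinner d k = 0"
  have Bk: "(B ^^ n) k \<in> M" using funpow_in[OF B k] .
  have "cinner ((B ^^ n) k) ((B ^^ n) k) = cinner ((T ^^ n) ((B ^^ n) k)) k"
    using funpow_adjoint[OF lin_bdd_on_in[OF T] B adj Bk k] by simp
  also have "\<dots> = 0" using orth Bk by blast
  finally have "(B ^^ n) k = 0" by (simp add: cinner_eq_zero_iff)
  thus "k = 0" using funpow_eq_0_imp_eq_0[of M B k n] B inj k by blast
qed


section \<open>Square-summable sequences and row operators\<close>

definition seq_single :: "nat \<Rightarrow> 'a::chilbert_space \<Rightarrow> nat \<Rightarrow> 'a" where
  "seq_single n x = (\<lambda>k. if k = n then x else 0)"

definition seq_trunc :: "nat \<Rightarrow> (nat \<Rightarrow> 'a::chilbert_space) \<Rightarrow> nat \<Rightarrow> 'a" where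
  "seq_trunc n s = (\<lambda>k. if k < n then s k else 0)"

definition seq_tail :: "nat \<Rightarrow> (nat \<Rightarrow> 'a::chilbert_space) \<Rightarrow> nat \<Rightarrow> 'a" where
  "seq_tail n s = (\<lambda>k. if k < n then 0 else s k)"

lemma row_entry_eq: "row_entry V n x = V (seq_single n x)"
  by (simp add: row_entry_def seq_single_def)

lemma l2seqD: "s \<in> l2seq L \<Longrightarrow> s k \<in> L" "s \<in> l2seq L \<Longrightarrow> summable (\<lambda>k. (norm (s k))\<^sup>2)"
  by (simp_all add: l2seq_def)

lemma l2seq_single: "0 \<in> L \<Longrightarrow> x \<in> L \<Longrightarrow> seq_single n x \<in> l2seq L"
  unfolding l2seq_def seq_single_def by (auto intro!: summable_finite[of "{n}"] split: if_splits)

lemma l2norm_single: "l2norm (seq_single n x) = norm x"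
proof -
  have "(\<Sum>k. (norm (seq_single n x k))\<^sup>2) = (\<Sum>k\<in>{n}. (norm (seq_single n x k))\<^sup>2)"
    by (rule suminf_finite) (auto simp: seq_single_def)
  thus ?thesis by (simp add: l2norm_def seq_single_def)
qed

lemma l2seq_zero: "0 \<in> L \<Longrightarrow> (\<lambda>k. 0) \<in> l2seq L"
  by (simp add: l2seq_def)

lemma l2seq_trunc: "0 \<in> L \<Longrightarrow> s \<in> l2seq L \<Longrightarrow> seq_trunc n s \<in> l2seq L"
  unfolding l2seq_def seq_trunc_def by (auto intro!: summable_finite[of "{..<n}"] split: if_splits)

lemma l2seq_tail: "0 \<in> L \<Longrightarrow> s \<in> l2seq L \<Longrightarrow> seq_tail n s \<in> l2seq L"
  unfolding l2seq_def seq_tail_def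
  by (auto elim!: summable_comparison_test'[where N = 0])

lemma seq_trunc_add_tail: "seq_add (seq_trunc n s) (seq_tail n s) = s"
  by (simp add: seq_add_def seq_trunc_def seq_tail_def fun_eq_iff)

lemma seq_trunc_Suc: "seq_trunc (Suc n) s = seq_add (seq_trunc n s) (seq_single n (s n))"
  by (auto simp: seq_add_def seq_trunc_def seq_single_def fun_eq_iff)

lemma norm_le_l2norm:
  assumes "s \<in> l2seq L"
  shows "norm (s k) \<le> l2norm s"
proof -
  have "(\<Sum>j\<in>{k}. (norm (s j))\<^sup>2) \<le> (\<Sum>j. (norm (s j))\<^sup>2)"
    by (rule sum_le_suminf[OF l2seqD(2)[OF assms]]) auto
  thus ?thesis unfolding l2norm_def by (intro real_le_rsqrt) simp
qed

lemma l2norm_tail_tendsto_0: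
  assumes s: "s \<in> l2seq L"
  shows "(\<lambda>n. l2norm (seq_tail n s)) \<longlonglongrightarrow> 0"
proof -
  define f where "f = (\<lambda>k. (norm (s k))\<^sup>2)"
  have f: "summable f" using l2seqD(2)[OF s] by (simp add: f_def)
  have "(\<Sum>k. (norm (seq_tail n s k))\<^sup>2) = (\<Sum>k. f (k + n))" for n
  proof -
    have "(\<lambda>k. (norm (seq_tail n s k))\<^sup>2) sums (\<Sum>k. f (k + n))"
      using sums_zero_iff_shift[of n "\<lambda>k. (norm (seq_tail n s k))\<^sup>2" "\<Sum>k. f (k + n)"]
        summable_iff_shift[of f n] f
      by (simp add: seq_tail_def f_def summable_sums)
    thus ?thesis by (rule sums_unique[symmetric])
  qed
  moreover have "(\<lambda>n. sqrt (\<Sum>k. f (k + n))) \<longlonglongrightarrow> sqrt 0"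
    by (intro tendsto_real_sqrt suminf_exist_split2 f)
  ultimately show ?thesis by (simp add: l2norm_def)
qed

lemma bop_l2D:
  assumes "bop_l2 L C V"
  shows bop_l2_in: "s \<in> l2seq L \<Longrightarrow> V s \<in> C"
    and bop_l2_add: "s \<in> l2seq L \<Longrightarrow> t \<in> l2seq L \<Longrightarrow> V (seq_add s t) = V s + V t"
    and bop_l2_scale: "s \<in> l2seq L \<Longrightarrow> V (seq_scale c s) = c *\<^sub>C V s"
    and bop_l2_bounded: "\<exists>K. \<forall>s\<in>l2seq L. norm (V s) \<le> K * l2norm s"
  using assms unfolding bop_l2_def by blast+

lemma bop_l2_zero: "bop_l2 L C V \<Longrightarrow> 0 \<in> L \<Longrightarrow> V (\<lambda>k. 0) = 0"
  using bop_l2_scale[of L C V "\<lambda>k. 0" 0, OF _ l2seq_zero] by (simp add: seq_scale_def)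

lemma lin_bdd_on_row_entry:
  assumes V: "bop_l2 L C V" and L: "complex_subspace L"
  shows "lin_bdd_on L C (row_entry V n)"
  unfolding lin_bdd_on_def row_entry_eq
proof (intro conjI ballI allI)
  have L0: "0 \<in> L" using complex_subspace_0[OF L] .
  fix x y c assume x: "x \<in> L" and y: "y \<in> L"
  have "seq_single n (x + y) = seq_add (seq_single n x) (seq_single n y)"
    by (auto simp: seq_single_def seq_add_def fun_eq_iff)
  thus "V (seq_single n (x + y)) = V (seq_single n x) + V (seq_single n y)"
    using bop_l2_add[OF V l2seq_single[OF L0 x] l2seq_single[OF L0 y]] by simp
next
  have L0: "0 \<in> L" using complex_subspace_0[OF L] .
  fix x c assume x: "x \<in> L"
  show "V (seq_single n x) \<in> C" using bop_l2_in[OF V l2seq_single[OF L0 x]] .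
  have "seq_single n (c *\<^sub>C x) = seq_scale c (seq_single n x)"
    by (auto simp: seq_single_def seq_scale_def fun_eq_iff)
  thus "V (seq_single n (c *\<^sub>C x)) = c *\<^sub>C V (seq_single n x)"
    using bop_l2_scale[OF V l2seq_single[OF L0 x]] by simp
next
  obtain K where "\<forall>s\<in>l2seq L. norm (V s) \<le> K * l2norm s" using bop_l2_bounded[OF V] by blast
  thus "\<exists>K. \<forall>x\<in>L. norm (V (seq_single n x)) \<le> K * norm x"
    using l2seq_single[OF complex_subspace_0[OF L]] l2norm_single by metis
qed

lemma bop_l2_sums_row_entries:
  assumes V: "bop_l2 L C V" and L0: "0 \<in> L" and s: "s \<in> l2seq L"
  shows "(\<lambda>n. \<Sum>k<n. row_entry V k (s k)) \<longlonglongrightarrow> V s"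
proof -
  obtain K where K: "\<forall>t\<in>l2seq L. norm (V t) \<le> K * l2norm t" using bop_l2_bounded[OF V] by blast
  have trunc: "V (seq_trunc n s) = (\<Sum>k<n. row_entry V k (s k))" for n
  proof (induction n)
    case 0 thus ?case using bop_l2_zero[OF V L0] by (simp add: seq_trunc_def)
  next
    case (Suc n)
    thus ?case using bop_l2_add[OF V l2seq_trunc[OF L0 s] l2seq_single[OF L0 l2seqD(1)[OF s]]]
      by (simp add: seq_trunc_Suc row_entry_eq)
  qed
  have split: "V s = V (seq_trunc n s) + V (seq_tail n s)" for n
    using bop_l2_add[OF V l2seq_trunc[OF L0 s, of n] l2seq_tail[OF L0 s, of n]]
    by (simp add: seq_trunc_add_tail)
  have "(\<lambda>n. V (seq_tail n s)) \<longlonglongrightarrow> 0"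
  proof (rule Lim_null_comparison)
    show "\<forall>\<^sub>F n in sequentially. norm (V (seq_tail n s)) \<le> K * l2norm (seq_tail n s)"
      using K l2seq_tail[OF L0 s] by simp
    show "(\<lambda>n. K * l2norm (seq_tail n s)) \<longlonglongrightarrow> 0"
      using tendsto_mult_right_zero[OF l2norm_tail_tendsto_0[OF s]] by simp
  qed
  hence "(\<lambda>n. V s - V (seq_tail n s)) \<longlonglongrightarrow> V s - 0" by (rule tendsto_diff[OF tendsto_const])
  moreover have "V s - V (seq_tail n s) = (\<Sum>k<n. row_entry V k (s k))" for n
    using split[of n] trunc[of n] by simp
  ultimately show ?thesis by simp
qed

lemma tensorS_single: "A 0 = 0 \<Longrightarrow> tensorS A (seq_single k x) = seq_single (Suc k) (A x)"
  by (auto simp: tensorS_def seq_single_def fun_eq_iff split: nat.split)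

lemma funpow_tensorS_initial_zero: "A 0 = 0 \<Longrightarrow> k < n \<Longrightarrow> ((tensorS A) ^^ n) s k = 0"
proof (induction n arbitrary: k)
  case (Suc n)
  thus ?case by (cases k) (simp_all add: tensorS_def)
qed simp

lemma l2seq_tensorS:
  assumes A: "lin_bdd_on L L A" and L0: "0 \<in> L" and s: "s \<in> l2seq L"
  shows "tensorS A s \<in> l2seq L"
  unfolding l2seq_def
proof (intro CollectI conjI allI)
  show "tensorS A s k \<in> L" for k
    using L0 lin_bdd_on_in[OF A l2seqD(1)[OF s]] by (simp add: tensorS_def split: nat.split)
  obtain K where K: "\<And>x. x \<in> L \<Longrightarrow> norm (A x) \<le> K * norm x"
    using lin_bdd_on_nonneg_bound[OF A] by blast
  have "(norm (A (s j)))\<^sup>2 \<le> K\<^sup>2 * (norm (s j))\<^sup>2" for j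
  proof -
    have "(norm (A (s j)))\<^sup>2 \<le> (K * norm (s j))\<^sup>2"
      by (rule power_mono[OF K[OF l2seqD(1)[OF s]]]) simp
    thus ?thesis by (simp add: power_mult_distrib)
  qed
  hence "summable (\<lambda>j. (norm (A (s j)))\<^sup>2)"
    by (intro summable_comparison_test'[OF summable_mult[OF l2seqD(2)[OF s], of "K\<^sup>2"]]) simp
  thus "summable (\<lambda>k. (norm (tensorS A s k))\<^sup>2)"
    by (subst summable_Suc_iff[symmetric]) (simp add: tensorS_def)
qed

text \<open>Pass to the limit in the partial sums of the row, using continuity of \<open>N\<close>.\<close>

lemma bop_l2_intertwines_tensorS:
  assumes V: "bop_l2 L C V" and L0: "0 \<in> L" and N: "bounded_linear N"
    and A: "lin_bdd_on L L A" "A 0 = 0"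
    and entries: "\<And>k x. x \<in> L \<Longrightarrow> N (row_entry V k x) = l *\<^sub>C row_entry V (Suc k) (A x)"
    and s: "s \<in> l2seq L"
  shows "N (V s) = l *\<^sub>C V (tensorS A s)"
proof -
  define t where "t = tensorS A s"
  have t: "t \<in> l2seq L" unfolding t_def by (rule l2seq_tensorS[OF A(1) L0 s])
  define B where "B n = (\<Sum>k<n. row_entry V (Suc k) (A (s k)))" for n
  have "(\<lambda>n. N (\<Sum>k<n. row_entry V k (s k))) \<longlonglongrightarrow> N (V s)"
    by (rule bounded_linear.tendsto[OF N bop_l2_sums_row_entries[OF V L0 s]])
  moreover have "N (\<Sum>k<n. row_entry V k (s k)) = l *\<^sub>C B n" for n
    by (induction n) (simp_all add: B_def linear_add[OF bounded_linear.linear[OF N]]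
        linear_0[OF bounded_linear.linear[OF N]]
        entries l2seqD(1)[OF s] scaleC_add_right)
  ultimately have lim_N: "(\<lambda>n. l *\<^sub>C B n) \<longlonglongrightarrow> N (V s)" by simp
  have "(\<lambda>n. \<Sum>k<Suc n. row_entry V k (t k)) \<longlonglongrightarrow> V t"
    using LIMSEQ_Suc[OF bop_l2_sums_row_entries[OF V L0 t]] .
  moreover have "(\<Sum>k<Suc n. row_entry V k (t k)) = B n" for n
  proof -
    have "row_entry V 0 (t 0) = 0"
      using bop_l2_zero[OF V L0] by (simp add: row_entry_def t_def tensorS_def)
    moreover have "t (Suc k) = A (s k)" for k by (simp add: t_def tensorS_def)
    ultimately show ?thesis by (subst sum.lessThan_Suc_shift) (simp add: B_def)
  qed
  ultimately have "B \<longlonglongrightarrow> V t" by simp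
  hence "(\<lambda>n. l *\<^sub>C B n) \<longlonglongrightarrow> l *\<^sub>C V t" by (rule tendsto_scaleC)
  with lim_N show ?thesis unfolding t_def using LIMSEQ_unique by blast
qed


definition Eext_into :: "'a::chilbert_space set \<Rightarrow> 'a set \<Rightarrow> ('a \<Rightarrow> 'a) \<Rightarrow> complex \<Rightarrow> ('a \<Rightarrow> 'a) set"
  where "Eext_into M C R l = {X. lin_bdd_on M C X \<and> (\<forall>x\<in>M. R (X x) = l *\<^sub>C X (R x))}"

lemma Eext_on_eq_Eext_into: "Eext_on M R l = Eext_into M M R l"
  by (simp add: Eext_on_def Eext_into_def op_on_def)

lemma Eext_intoD:
  assumes "X \<in> Eext_into M C R l"
  shows Eext_into_lin_bdd_on: "lin_bdd_on M C X"
    and Eext_into_intertwines: "x \<in> M \<Longrightarrow> R (X x) = l *\<^sub>C X (R x)"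
  using assms by (auto simp: Eext_into_def)

lemma Eext_into_restrict:
  "X \<in> Eext_into M C R l \<Longrightarrow> M' \<subseteq> M \<Longrightarrow> (\<And>x. x \<in> M' \<Longrightarrow> X x \<in> C') \<Longrightarrow> X \<in> Eext_into M' C' R l"
  unfolding Eext_into_def using lin_bdd_on_restrict by blast

lemma zero_notin_sigma_ext:
  assumes R: "lin_bdd_on UNIV UNIV R" and "inj R"
  shows "0 \<notin> sigma_ext R"
proof -
  have R0: "R 0 = 0" using lin_bdd_on_zero[OF R] by (simp add: complex_subspace_def)
  have "X = (\<lambda>x. 0)" if "X \<in> Eext_on UNIV R 0" for X
  proof
    fix x
    have "R (X x) = R 0" using that R0 by (simp add: Eext_on_def)
    thus "X x = 0" by (rule injD[OF \<open>inj R\<close>])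
  qed
  moreover have "(\<lambda>x. 0) \<in> Eext_on UNIV R 0"
    using R0 by (auto simp: Eext_on_def op_on_def lin_bdd_on_def intro: exI[of _ 0])
  ultimately have "Eext_on UNIV R 0 = {\<lambda>x. 0}" by blast
  thus ?thesis by (simp add: sigma_ext_def)
qed

text \<open>\<open>R = N \<oplus> T\<close> on \<open>E \<oplus> H\<close>, with \<open>T\<close> carried by \<open>UT\<close> onto \<open>P \<otimes> S\<close> on
  \<open>\<oplus>\<^sub>k L\<close>, where \<open>P = |T|\<close>.\<close>

locale canonical_model =
  fixes R :: "'a::chilbert_space \<Rightarrow> 'a"
    and E H L :: "'a set"
    and P :: "'a \<Rightarrow> 'a"
    and UT :: "'a \<Rightarrow> nat \<Rightarrow> 'a"
    and l :: complex
  assumes R_bounded: "lin_bdd_on UNIV UNIV R"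
    and R_inj: "inj R"
    and canonical: "canonical_decomp R E H"
    and modulus: "modulus_on H R P"
    and L: "closed_subspace L" "L \<subseteq> H"
    and UT_unitary: "unitary_l2 H L UT"
    and UT_intertwines: "\<And>h. h \<in> H \<Longrightarrow> UT (R h) = tensorS P (UT h)"
    and l_nonzero: "l \<noteq> 0"
begin

lemma R_add: "R (x + y) = R x + R y"
  using lin_bdd_on_add[OF R_bounded] by simp

lemma R_scaleC: "R (c *\<^sub>C x) = c *\<^sub>C R x"
  using lin_bdd_on_scaleC[OF R_bounded] by simp

lemma R_diff: "R (x - y) = R x - R y"
  by (metis R_add diff_add_cancel eq_diff_eq)

lemma R_zero: "R 0 = 0"
  using R_scaleC[of 0 0] by simp

lemma R_eq_0_iff: "R x = 0 \<longleftrightarrow> x = 0"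
  using R_inj R_zero by (metis injD)

lemma bounded_linear_R: "bounded_linear R"
  by (rule bounded_linear_if_lin_bdd_on_UNIV[OF R_bounded])

lemma E: "closed_subspace E"
  using canonical by (simp add: canonical_decomp_def reduces_def)

lemma H_eq: "H = orth_compl E"
  using canonical by (simp add: canonical_decomp_def)

lemma H: "closed_subspace H"
  by (simp add: H_eq closed_subspace_orth_compl)

lemma R_in_E: "x \<in> E \<Longrightarrow> R x \<in> E"
  using canonical by (simp add: canonical_decomp_def reduces_def)

lemma R_in_H: "x \<in> H \<Longrightarrow> R x \<in> H"
  using canonical H_eq by (simp add: canonical_decomp_def reduces_def)

lemma proj_E_R: "proj E (R x) = R (proj E x)"
proof (rule proj_unique[OF E])
  show "R (proj E x) \<in> E" by (rule R_in_E[OF proj_in[OF E]])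
  show "R x - R (proj E x) \<in> orth_compl E"
    using R_in_H[of "x - proj E x"] proj_diff_in_orth_compl[OF E] by (simp add: H_eq R_diff)
qed

lemma normal_adjoint_E:
  obtains S where "\<And>x. x \<in> E \<Longrightarrow> S x \<in> E"
    "\<And>x y. x \<in> E \<Longrightarrow> y \<in> E \<Longrightarrow> cinner (R x) y = cinner x (S y)"
    "\<And>x. x \<in> E \<Longrightarrow> R (S x) = S (R x)"
proof -
  obtain S where "\<forall>x\<in>E. S x \<in> E" "\<forall>x\<in>E. \<forall>y\<in>E. cinner (R x) y = cinner x (S y)"
    "\<forall>x\<in>E. R (S x) = S (R x)"
    using canonical unfolding canonical_decomp_def normal_on_def op_on_def lin_bdd_on_def by blast
  thus ?thesis using that[of S] by blast
qed

lemma P_bounded: "lin_bdd_on H H P"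
  using modulus by (simp add: modulus_on_def op_on_def)

lemma P_adjoint: "x \<in> H \<Longrightarrow> y \<in> H \<Longrightarrow> cinner (P x) y = cinner x (P y)"
  using modulus by (simp add: modulus_on_def)

lemma P_eq_0_iff: "x \<in> H \<Longrightarrow> P x = 0 \<longleftrightarrow> x = 0"
proof -
  assume "x \<in> H"
  hence "cinner (P x) (P x) = cinner (R x) (R x)" using modulus by (simp add: modulus_on_def)
  hence "P x = 0 \<longleftrightarrow> R x = 0" by (metis cinner_eq_zero_iff)
  thus ?thesis by (simp add: R_eq_0_iff)
qed

lemma P_zero: "P 0 = 0"
  using P_eq_0_iff[of 0] complex_subspace_0[OF closed_subspace_imp_subspace[OF H]] by simp

lemma UT_in: "h \<in> H \<Longrightarrow> UT h \<in> l2seq L"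
  using UT_unitary by (simp add: unitary_l2_def)

lemma UT_add: "x \<in> H \<Longrightarrow> y \<in> H \<Longrightarrow> UT (x + y) = seq_add (UT x) (UT y)"
  using UT_unitary by (simp add: unitary_l2_def)

lemma UT_scaleC: "x \<in> H \<Longrightarrow> UT (c *\<^sub>C x) = seq_scale c (UT x)"
  using UT_unitary by (simp add: unitary_l2_def)

lemma UT_isometry: "h \<in> H \<Longrightarrow> l2norm (UT h) = norm h"
  using UT_unitary by (simp add: unitary_l2_def)

lemma UT_surj: "s \<in> l2seq L \<Longrightarrow> \<exists>h\<in>H. UT h = s"
  using UT_unitary by (simp add: unitary_l2_def)

lemma lin_bdd_on_UT_coordinate: "lin_bdd_on H UNIV (\<lambda>h. UT h k)"
  unfolding lin_bdd_on_def
  using UT_add UT_scaleC norm_le_l2norm[OF UT_in] UT_isometry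
  by (auto simp: seq_add_def seq_scale_def intro!: exI[of _ 1])

lemma UT_inj: "x \<in> H \<Longrightarrow> y \<in> H \<Longrightarrow> UT x = UT y \<Longrightarrow> x = y"
proof -
  assume x: "x \<in> H" and y: "y \<in> H" and eq: "UT x = UT y"
  have "UT (x - y) k = 0" for k
    using lin_bdd_on_diff[OF lin_bdd_on_UT_coordinate closed_subspace_imp_subspace[OF H] x y] eq
    by simp
  hence "l2norm (UT (x - y)) = 0" by (simp add: l2norm_def)
  hence "norm (x - y) = 0"
    using UT_isometry complex_subspace_diff[OF closed_subspace_imp_subspace[OF H] x y] by simp
  thus ?thesis by simp
qed

definition UT_inv :: "(nat \<Rightarrow> 'a) \<Rightarrow> 'a" where
  "UT_inv s = (SOME h. h \<in> H \<and> UT h = s)"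

lemma UT_inv: "s \<in> l2seq L \<Longrightarrow> UT_inv s \<in> H \<and> UT (UT_inv s) = s"
  unfolding UT_inv_def using UT_surj by (metis (mono_tags, lifting) someI)

lemma UT_inv_UT: "h \<in> H \<Longrightarrow> UT_inv (UT h) = h"
  using UT_inv[OF UT_in] UT_inj by blast

lemma UT_funpow_R: "h \<in> H \<Longrightarrow> UT ((R ^^ n) h) = ((tensorS P) ^^ n) (UT h)"
  by (induction n) (simp_all add: UT_intertwines funpow_in[of H R, OF R_in_H])

lemma L_subspace: "complex_subspace L"
  by (rule closed_subspace_imp_subspace[OF L(1)])

lemma L_zero: "0 \<in> L"
  by (rule complex_subspace_0[OF L_subspace])

text \<open>\<open>L\<close> is invariant under \<open>P\<close>: in the model, \<open>P\<close> acts on the second coordinate of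
  \<open>UT (R h)\<close>, which lies in \<open>L\<close>.\<close>

lemma P_in_L: "x \<in> L \<Longrightarrow> P x \<in> L"
proof -
  assume x: "x \<in> L"
  obtain h where h: "h \<in> H" "UT h = seq_single 0 x"
    using UT_surj[OF l2seq_single[OF L_zero x]] by blast
  have "UT (R h) = seq_single 1 (P x)"
    using UT_intertwines[OF h(1)] h(2) tensorS_single[of P, OF P_zero] by simp
  with UT_in[OF R_in_H[OF h(1)]] show ?thesis by (metis l2seqD(1) seq_single_def)
qed

lemma Ppow_in_L: "x \<in> L \<Longrightarrow> (P ^^ n) x \<in> L"
  by (rule funpow_in[of L P, OF P_in_L])

lemma P_bounded_L: "lin_bdd_on L L P"
  using lin_bdd_on_restrict[OF P_bounded L(2) P_in_L] .

lemma dense_range_Ppow: "L \<subseteq> closure ((P ^^ n) ` L)"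
  by (rule dense_range_funpow_if_adjoint_injective[OF L(1) P_bounded_L, of P])
    (use L(2) P_in_L P_adjoint P_eq_0_iff in \<open>auto simp: subset_iff\<close>)

lemma dense_range_Rpow: "E \<subseteq> closure ((R ^^ n) ` E)"
proof -
  obtain S where S: "\<And>x. x \<in> E \<Longrightarrow> S x \<in> E"
    and adj: "\<And>x y. x \<in> E \<Longrightarrow> y \<in> E \<Longrightarrow> cinner (R x) y = cinner x (S y)"
    and comm: "\<And>x. x \<in> E \<Longrightarrow> R (S x) = S (R x)"
    using normal_adjoint_E by metis
  have "y = 0" if y: "y \<in> E" and "S y = 0" for y
  proof -
    have "cinner (R y) (R y) = cinner y (R (S y))" using adj[OF y R_in_E[OF y]] comm[OF y] by simp
    with \<open>S y = 0\<close> have "R y = 0" by (simp add: R_zero cinner_eq_zero_iff)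
    thus ?thesis by (simp add: R_eq_0_iff)
  qed
  moreover have "lin_bdd_on E E R" using lin_bdd_on_restrict[OF R_bounded _ R_in_E] by simp
  ultimately show ?thesis
    using dense_range_funpow_if_adjoint_injective[OF E _ S adj] by blast
qed


section \<open>The intertwiners \<open>E\<^sub>i\<^sub>n\<^sub>t(N, A\<^sub>T \<otimes> S, \<lambda>)\<close>\<close>

lemma Eint_l2D:
  assumes "V \<in> Eint_l2 E L R P l"
  shows Eint_l2_bop_l2: "bop_l2 L E V"
    and Eint_l2_intertwines: "s \<in> l2seq L \<Longrightarrow> R (V s) = l *\<^sub>C V (tensorS P s)"
  using assms by (auto simp: Eint_l2_def)

lemma Eint_l2_row_entry_Suc:
  assumes V: "V \<in> Eint_l2 E L R P l" and x: "x \<in> L"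
  shows "R (row_entry V k x) = l *\<^sub>C row_entry V (Suc k) (P x)"
  using Eint_l2_intertwines[OF V l2seq_single[OF L_zero x]] tensorS_single[of P, OF P_zero]
  by (simp add: row_entry_eq)

lemma Eint_l2_row_entry_Ppow:
  assumes V: "V \<in> Eint_l2 E L R P l" and x: "x \<in> L"
  shows "row_entry V n ((P ^^ n) x) = (inverse l ^ n) *\<^sub>C (R ^^ n) (row_entry V 0 x)"
proof (induction n)
  case (Suc n)
  have "l *\<^sub>C row_entry V (Suc n) ((P ^^ Suc n) x) = R (row_entry V n ((P ^^ n) x))"
    using Eint_l2_row_entry_Suc[OF V Ppow_in_L[OF x]] by simp
  hence "row_entry V (Suc n) ((P ^^ Suc n) x) = inverse l *\<^sub>C R (row_entry V n ((P ^^ n) x))"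
    using l_nonzero by (metis scaleC_scaleC left_inverse scaleC_one)
  thus ?case using Suc by (simp add: R_scaleC scaleC_scaleC)
qed (simp add: scaleC_one)

text \<open>The uniqueness of the bounded extension \<open>V\<^sub>n\<close> in the theorem.\<close>

lemma eq_on_L_if_eq_on_range_Ppow:
  assumes Y: "lin_bdd_on L C Y" and Y': "lin_bdd_on L C Y'"
    and eq: "\<And>x. x \<in> L \<Longrightarrow> Y ((P ^^ n) x) = Y' ((P ^^ n) x)" and y: "y \<in> L"
  shows "Y y = Y' y"
proof -
  have diff: "lin_bdd_on L UNIV (\<lambda>x. Y x - Y' x)"
    using lin_bdd_on_restrict[OF Y] lin_bdd_on_restrict[OF Y']
    by (intro lin_bdd_on_diff_fun) (auto simp: complex_subspace_def)
  have range: "(P ^^ n) ` L \<subseteq> L" using Ppow_in_L by blast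
  have "Y y - Y' y = 0"
    by (rule lin_bdd_on_eq_0_if_eq_0_on_dense[OF diff L_subspace range dense_range_Ppow _ y])
      (use eq in auto)
  thus ?thesis by simp
qed

lemma Eint_l2_row_entry_A_class:
  assumes V: "V \<in> Eint_l2 E L R P l"
  shows "row_entry V 0 \<in> A_class (cmod l) L E R P"
proof -
  obtain K where K: "\<forall>s\<in>l2seq L. norm (V s) \<le> K * l2norm s"
    using bop_l2_bounded[OF Eint_l2_bop_l2[OF V]] by blast
  have "norm (((1 / cmod l) ^ n) *\<^sub>R (R ^^ n) (row_entry V 0 x)) \<le> max K 0 * norm ((P ^^ n) x)"
    if x: "x \<in> L" for x n
  proof -
    have "norm (((1 / cmod l) ^ n) *\<^sub>R (R ^^ n) (row_entry V 0 x))
        = norm (row_entry V n ((P ^^ n) x))"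
      by (simp add: Eint_l2_row_entry_Ppow[OF V x] norm_scaleC norm_power norm_inverse
          divide_inverse)
    also have "\<dots> \<le> K * norm ((P ^^ n) x)"
      using K[rule_format, OF l2seq_single[OF L_zero Ppow_in_L[OF x]]]
      by (simp add: row_entry_eq l2norm_single)
    also have "\<dots> \<le> max K 0 * norm ((P ^^ n) x)" by (simp add: mult_right_mono)
    finally show ?thesis .
  qed
  with lin_bdd_on_row_entry[OF Eint_l2_bop_l2[OF V] L_subspace] show ?thesis
    unfolding A_class_def by (auto intro!: exI[of _ "max K 0"])
qed

lemma Eint_l2_if_row_entries:
  assumes V: "bop_l2 L E V"
    and entries: "\<And>n x. x \<in> L \<Longrightarrow>
      row_entry V n ((P ^^ n) x) = (inverse l ^ n) *\<^sub>C (R ^^ n) (row_entry V 0 x)"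
  shows "V \<in> Eint_l2 E L R P l"
proof -
  have row: "\<And>n. lin_bdd_on L E (row_entry V n)" by (rule lin_bdd_on_row_entry[OF V L_subspace])
  have "R (row_entry V k x) = l *\<^sub>C row_entry V (Suc k) (P x)" if x: "x \<in> L" for k x
  proof (rule eq_on_L_if_eq_on_range_Ppow[where n = k and C = UNIV, OF _ _ _ x])
    show "lin_bdd_on L UNIV (\<lambda>x. R (row_entry V k x))"
      by (rule lin_bdd_on_comp[OF lin_bdd_on_into_UNIV[OF row] R_bounded])
    show "lin_bdd_on L UNIV (\<lambda>x. l *\<^sub>C row_entry V (Suc k) (P x))"
      using lin_bdd_on_comp[OF lin_bdd_on_into_UNIV[OF lin_bdd_on_comp[OF P_bounded_L row]]
          lin_bdd_on_UNIV_scaleC] .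
    fix y assume "y \<in> L"
    have "R (row_entry V k ((P ^^ k) y)) = inverse l ^ k *\<^sub>C (R ^^ Suc k) (row_entry V 0 y)"
      using entries[OF \<open>y \<in> L\<close>, of k] by (simp add: R_scaleC)
    moreover have "l *\<^sub>C row_entry V (Suc k) (P ((P ^^ k) y))
        = (l * inverse l ^ Suc k) *\<^sub>C (R ^^ Suc k) (row_entry V 0 y)"
      using entries[OF \<open>y \<in> L\<close>, of "Suc k"] by (simp add: scaleC_scaleC)
    moreover have "l * inverse l ^ Suc k = inverse l ^ k" using l_nonzero by (simp add: field_simps)
    ultimately show "R (row_entry V k ((P ^^ k) y)) = l *\<^sub>C row_entry V (Suc k) (P ((P ^^ k) y))"
      by (simp only:)
  qed
  hence "R (V s) = l *\<^sub>C V (tensorS P s)" if "s \<in> l2seq L" for s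
    by (rule bop_l2_intertwines_tensorS[OF V L_zero bounded_linear_R P_bounded_L P_zero _ that])
  with V show ?thesis by (simp add: Eint_l2_def)
qed

lemma Eint_l2_eq:
  "Eint_l2 E L R P l =
     {V. bop_l2 L E V
         \<and> row_entry V 0 \<in> A_class (cmod l) L E R P
         \<and> (\<forall>n\<ge>1.
              (\<forall>x\<in>L. row_entry V n ((P ^^ n) x) = (inverse l ^ n) *\<^sub>C (R ^^ n) (row_entry V 0 x))
            \<and> (\<forall>Y. lin_bdd_on L E Y
                  \<and> (\<forall>x\<in>L. Y ((P ^^ n) x) = (inverse l ^ n) *\<^sub>C (R ^^ n) (row_entry V 0 x))
                  \<longrightarrow> (\<forall>y\<in>L. Y y = row_entry V n y)))}"
  (is "_ = ?rhs")
proof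
  show "Eint_l2 E L R P l \<subseteq> ?rhs"
  proof (intro subsetI CollectI conjI allI impI ballI)
    fix V assume V: "V \<in> Eint_l2 E L R P l"
    show "bop_l2 L E V" by (rule Eint_l2_bop_l2[OF V])
    show "row_entry V 0 \<in> A_class (cmod l) L E R P" by (rule Eint_l2_row_entry_A_class[OF V])
    show "row_entry V n ((P ^^ n) x) = (inverse l ^ n) *\<^sub>C (R ^^ n) (row_entry V 0 x)"
      if "x \<in> L" for n x by (rule Eint_l2_row_entry_Ppow[OF V that])
    fix n Y y
    assume "lin_bdd_on L E Y \<and> (\<forall>x\<in>L. Y ((P ^^ n) x) = (inverse l ^ n) *\<^sub>C (R ^^ n) (row_entry V 0 x))"
      and "y \<in> L"
    thus "Y y = row_entry V n y"
      using eq_on_L_if_eq_on_range_Ppow[OF _ lin_bdd_on_row_entry[OF Eint_l2_bop_l2[OF V] L_subspace]]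
        Eint_l2_row_entry_Ppow[OF V]
      by metis
  qed
  show "?rhs \<subseteq> Eint_l2 E L R P l"
  proof
    fix V assume "V \<in> ?rhs"
    hence "bop_l2 L E V"
      and "\<And>n x. x \<in> L \<Longrightarrow> row_entry V n ((P ^^ n) x) = (inverse l ^ n) *\<^sub>C (R ^^ n) (row_entry V 0 x)"
      by (auto simp: scaleC_one) (metis One_nat_def funpow_0 less_one not_le power_0 scaleC_one)
    thus "V \<in> Eint_l2 E L R P l" by (rule Eint_l2_if_row_entries)
  qed
qed


section \<open>Extended eigenvectors of \<open>R\<close> in matrix form\<close>

lemma Eext_into_funpow:
  assumes X: "X \<in> Eext_into M C R l" and M: "\<And>x. x \<in> M \<Longrightarrow> R x \<in> M" and x: "x \<in> M"
  shows "(R ^^ n) (X x) = l ^ n *\<^sub>C X ((R ^^ n) x)"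
proof (induction n)
  case (Suc n)
  have "(R ^^ Suc n) (X x) = l ^ n *\<^sub>C R (X ((R ^^ n) x))" by (simp add: Suc R_scaleC)
  also have "\<dots> = l ^ Suc n *\<^sub>C X ((R ^^ Suc n) x)"
    using Eext_into_intertwines[OF X funpow_in[of M R, OF M x]] by (simp add: scaleC_scaleC mult.commute)
  finally show ?case .
qed (simp add: scaleC_one)

text \<open>\<open>UT\<close> maps \<open>W (R\<^sup>n e)\<close> into the range of \<open>(P \<otimes> S)\<^sup>n\<close>, whose first \<open>n\<close> coordinates vanish,
  and the ranges of \<open>R\<^sup>n\<close> are dense in \<open>E\<close>.\<close>

lemma Eext_into_E_H_eq_0:
  assumes W: "W \<in> Eext_into E H R l" and e: "e \<in> E"
  shows "W e = 0"
proof -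
  have W_lin: "lin_bdd_on E H W" by (rule Eext_into_lin_bdd_on[OF W])
  have vanish: "UT (W ((R ^^ n) x)) k = 0" if "k < n" "x \<in> E" for k n x
  proof -
    have Wx: "W x \<in> H" using lin_bdd_on_in[OF W_lin \<open>x \<in> E\<close>] .
    have "W ((R ^^ n) x) = inverse l ^ n *\<^sub>C (R ^^ n) (W x)"
      using Eext_into_funpow[OF W R_in_E \<open>x \<in> E\<close>] l_nonzero
      by (simp add: scaleC_scaleC power_mult_distrib[symmetric] scaleC_one)
    hence "UT (W ((R ^^ n) x)) = seq_scale (inverse l ^ n) (((tensorS P) ^^ n) (UT (W x)))"
      using UT_scaleC[OF funpow_in[of H R, OF R_in_H Wx]] UT_funpow_R[OF Wx] by simp
    thus ?thesis using funpow_tensorS_initial_zero[of P, OF P_zero \<open>k < n\<close>] by (simp add: seq_scale_def)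
  qed
  have "UT (W e) k = 0" for k
  proof (rule lin_bdd_on_eq_0_if_eq_0_on_dense[OF _ closed_subspace_imp_subspace[OF E] _
        dense_range_Rpow[of "Suc k"] _ e])
    show "lin_bdd_on E UNIV (\<lambda>x. UT (W x) k)"
      by (rule lin_bdd_on_comp[OF W_lin lin_bdd_on_UT_coordinate])
    show "(R ^^ Suc k) ` E \<subseteq> E" using funpow_in[of E R, OF R_in_E] by blast
    show "UT (W d) k = 0" if "d \<in> (R ^^ Suc k) ` E" for d
      using that vanish[of k "Suc k"] by blast
  qed
  moreover have "UT 0 = (\<lambda>k. 0)"
    using UT_scaleC[of 0 0] complex_subspace_0[OF closed_subspace_imp_subspace[OF H]]
    by (simp add: seq_scale_def)
  ultimately have "UT (W e) = UT 0" by auto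
  thus ?thesis
    using UT_inj lin_bdd_on_in[OF W_lin e] complex_subspace_0[OF closed_subspace_imp_subspace[OF H]]
    by blast
qed

lemma Eext_into_comp_UT:
  assumes V: "V \<in> Eint_l2 E L R P l"
  shows "(\<lambda>h. V (UT h)) \<in> Eext_into H E R l"
  unfolding Eext_into_def lin_bdd_on_def
proof (intro CollectI conjI ballI allI)
  have bop: "bop_l2 L E V" by (rule Eint_l2_bop_l2[OF V])
  fix x y c assume x: "x \<in> H"
  show "V (UT x) \<in> E" by (rule bop_l2_in[OF bop UT_in[OF x]])
  show "V (UT (c *\<^sub>C x)) = c *\<^sub>C V (UT x)" by (simp add: UT_scaleC[OF x] bop_l2_scale[OF bop UT_in[OF x]])
  show "R (V (UT x)) = l *\<^sub>C V (UT (R x))"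
    by (simp add: Eint_l2_intertwines[OF V UT_in[OF x]] UT_intertwines[OF x])
  assume y: "y \<in> H"
  show "V (UT (x + y)) = V (UT x) + V (UT y)"
    by (simp add: UT_add[OF x y] bop_l2_add[OF bop UT_in[OF x] UT_in[OF y]])
next
  obtain K where "\<forall>s\<in>l2seq L. norm (V s) \<le> K * l2norm s"
    using bop_l2_bounded[OF Eint_l2_bop_l2[OF V]] by blast
  thus "\<exists>K. \<forall>x\<in>H. norm (V (UT x)) \<le> K * norm x" using UT_in UT_isometry by metis
qed

lemma UT_inv_add: "s \<in> l2seq L \<Longrightarrow> t \<in> l2seq L \<Longrightarrow> UT_inv (seq_add s t) = UT_inv s + UT_inv t"
  by (metis UT_add UT_inv UT_inv_UT closed_subspace_imp_subspace complex_subspace_add H)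

lemma UT_inv_scale: "s \<in> l2seq L \<Longrightarrow> UT_inv (seq_scale c s) = c *\<^sub>C UT_inv s"
  by (metis UT_scaleC UT_inv UT_inv_UT closed_subspace_imp_subspace complex_subspace_scaleC H)

lemma UT_inv_tensorS: "s \<in> l2seq L \<Longrightarrow> UT_inv (tensorS P s) = R (UT_inv s)"
  by (metis UT_intertwines UT_inv UT_inv_UT R_in_H)

lemma norm_UT_inv: "s \<in> l2seq L \<Longrightarrow> norm (UT_inv s) = l2norm s"
  using UT_inv UT_isometry by metis

lemma Eint_l2_comp_UT_inv:
  assumes Y: "Y \<in> Eext_into H E R l"
  shows "(\<lambda>s. Y (UT_inv s)) \<in> Eint_l2 E L R P l"
  unfolding Eint_l2_def bop_l2_def
proof (intro CollectI conjI ballI allI)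
  have Y_lin: "lin_bdd_on H E Y" by (rule Eext_into_lin_bdd_on[OF Y])
  fix s t c assume s: "s \<in> l2seq L"
  have h: "UT_inv s \<in> H" using UT_inv[OF s] by blast
  show "Y (UT_inv s) \<in> E" by (rule lin_bdd_on_in[OF Y_lin h])
  show "Y (UT_inv (seq_scale c s)) = c *\<^sub>C Y (UT_inv s)"
    by (simp add: UT_inv_scale[OF s] lin_bdd_on_scaleC[OF Y_lin h])
  show "R (Y (UT_inv s)) = l *\<^sub>C Y (UT_inv (tensorS P s))"
    by (simp add: UT_inv_tensorS[OF s] Eext_into_intertwines[OF Y h])
  assume t: "t \<in> l2seq L"
  show "Y (UT_inv (seq_add s t)) = Y (UT_inv s) + Y (UT_inv t)"
    using UT_inv[OF t] by (simp add: UT_inv_add[OF s t] lin_bdd_on_add[OF Y_lin h])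
next
  obtain K where "\<And>x. x \<in> H \<Longrightarrow> norm (Y x) \<le> K * norm x"
    using lin_bdd_on_nonneg_bound[OF Eext_into_lin_bdd_on[OF Y]] by blast
  thus "\<exists>K. \<forall>s\<in>l2seq L. norm (Y (UT_inv s)) \<le> K * l2norm s"
    using UT_inv norm_UT_inv by metis
qed

lemma Eext_into_proj_E:
  assumes X: "X \<in> Eext_into M UNIV R l"
  shows "(\<lambda>x. proj E (X x)) \<in> Eext_into M E R l"
  using lin_bdd_on_comp[OF Eext_into_lin_bdd_on[OF X] lin_bdd_on_proj[OF E]]
    Eext_into_intertwines[OF X]
  by (simp add: Eext_into_def proj_E_R[symmetric] proj_scaleC[OF E])

lemma Eext_into_proj_H:
  assumes X: "X \<in> Eext_into M UNIV R l"
  shows "(\<lambda>x. X x - proj E (X x)) \<in> Eext_into M H R l"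
  using lin_bdd_on_comp[OF Eext_into_lin_bdd_on[OF X] lin_bdd_on_proj_orth_compl[OF E]]
    Eext_into_intertwines[OF X]
  by (simp add: Eext_into_def H_eq R_diff proj_E_R[symmetric] proj_scaleC[OF E] scaleC_diff_right)

lemma Eext_into_add:
  assumes "X \<in> Eext_into M UNIV R l" "Y \<in> Eext_into M UNIV R l"
  shows "(\<lambda>x. X x + Y x) \<in> Eext_into M UNIV R l"
  using lin_bdd_on_add_fun[OF Eext_into_lin_bdd_on[OF assms(1)] Eext_into_lin_bdd_on[OF assms(2)]]
    Eext_into_intertwines[OF assms(1)] Eext_into_intertwines[OF assms(2)]
  by (simp add: Eext_into_def complex_subspace_def R_add scaleC_add_right)

lemma Eext_into_direct_sum:
  assumes U: "U \<in> Eext_into E UNIV R l" and Y: "Y \<in> Eext_into H UNIV R l"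
  shows "(\<lambda>x. U (proj E x) + Y (x - proj E x)) \<in> Eext_into UNIV UNIV R l"
proof (rule Eext_into_add)
  show "(\<lambda>x. U (proj E x)) \<in> Eext_into UNIV UNIV R l"
    using lin_bdd_on_comp[OF lin_bdd_on_proj[OF E] Eext_into_lin_bdd_on[OF U]]
      Eext_into_intertwines[OF U proj_in[OF E]]
    by (simp add: Eext_into_def proj_E_R)
  show "(\<lambda>x. Y (x - proj E x)) \<in> Eext_into UNIV UNIV R l"
    using lin_bdd_on_comp[OF lin_bdd_on_proj_orth_compl[OF E, folded H_eq] Eext_into_lin_bdd_on[OF Y]]
      Eext_into_intertwines[OF Y proj_diff_in_orth_compl[OF E, folded H_eq]]
    by (simp add: Eext_into_def H_eq proj_E_R R_diff)
qed

lemma Eext_on_UNIV_decompose: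
  assumes X: "X \<in> Eext_on UNIV R l"
  shows "\<exists>U V W. U \<in> Eext_on E R l \<and> V \<in> Eint_l2 E L R P l \<and> W \<in> Eext_on H R l
            \<and> (\<forall>e\<in>E. \<forall>h\<in>H. X (e + h) = U e + V (UT h) + W h)"
proof -
  have X': "X \<in> Eext_into UNIV UNIV R l" using X by (simp add: Eext_on_eq_Eext_into)
  define U where "U x = proj E (X x)" for x
  define W where "W x = X x - proj E (X x)" for x
  have U: "U \<in> Eext_into UNIV E R l" unfolding U_def by (rule Eext_into_proj_E[OF X'])
  have W: "W \<in> Eext_into UNIV H R l" unfolding W_def by (rule Eext_into_proj_H[OF X'])
  have W_E: "W e = 0" if "e \<in> E" for e
    using Eext_into_E_H_eq_0[OF Eext_into_restrict[OF W] that] Eext_into_lin_bdd_on[OF W]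
    by (simp add: lin_bdd_on_in)
  have "U \<in> Eext_on E R l"
    using Eext_into_restrict[OF U] lin_bdd_on_in[OF Eext_into_lin_bdd_on[OF U]]
    by (simp add: Eext_on_eq_Eext_into)
  moreover have "(\<lambda>s. U (UT_inv s)) \<in> Eint_l2 E L R P l"
    using Eint_l2_comp_UT_inv[OF Eext_into_restrict[OF U]] lin_bdd_on_in[OF Eext_into_lin_bdd_on[OF U]]
    by simp
  moreover have "W \<in> Eext_on H R l"
    using Eext_into_restrict[OF W] lin_bdd_on_in[OF Eext_into_lin_bdd_on[OF W]]
    by (simp add: Eext_on_eq_Eext_into)
  moreover have "X (e + h) = U e + U (UT_inv (UT h)) + W h" if "e \<in> E" "h \<in> H" for e h
    using lin_bdd_on_add[OF Eext_into_lin_bdd_on[OF X']] W_E[OF that(1)] UT_inv_UT[OF that(2)]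
    by (simp add: U_def W_def)
  ultimately show ?thesis by blast
qed

lemma Eext_on_UNIV_compose:
  assumes U: "U \<in> Eext_on E R l" and V: "V \<in> Eint_l2 E L R P l" and W: "W \<in> Eext_on H R l"
    and X: "\<forall>e\<in>E. \<forall>h\<in>H. X (e + h) = U e + V (UT h) + W h"
  shows "X \<in> Eext_on UNIV R l"
proof -
  have "(\<lambda>h. V (UT h) + W h) \<in> Eext_into H UNIV R l"
    using Eext_into_add[OF Eext_into_restrict[OF Eext_into_comp_UT[OF V]]
        Eext_into_restrict[OF W[unfolded Eext_on_eq_Eext_into]]]
    by simp
  from Eext_into_direct_sum[OF Eext_into_restrict[OF U[unfolded Eext_on_eq_Eext_into]] this]
  have "(\<lambda>x. U (proj E x) + (V (UT (x - proj E x)) + W (x - proj E x))) \<in> Eext_on UNIV R l"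
    by (simp add: Eext_on_eq_Eext_into)
  moreover have "X = (\<lambda>x. U (proj E x) + (V (UT (x - proj E x)) + W (x - proj E x)))"
  proof
    fix x
    show "X x = U (proj E x) + (V (UT (x - proj E x)) + W (x - proj E x))"
      using X[rule_format, OF proj_in[OF E, of x] proj_diff_in_orth_compl[OF E, of x, folded H_eq]]
      by (simp add: add.assoc)
  qed
  ultimately show ?thesis by simp
qed

lemma Eext_on_UNIV_eq:
  "Eext_on UNIV R l =
     {X. \<exists>U V W. U \<in> Eext_on E R l \<and> V \<in> Eint_l2 E L R P l \<and> W \<in> Eext_on H R l
            \<and> (\<forall>e\<in>E. \<forall>h\<in>H. X (e + h) = U e + V (UT h) + W h)}"
  using Eext_on_UNIV_decompose Eext_on_UNIV_compose by blast

end


text \<open>Quasinormality is used only through the boundedness of \<open>R\<close>, and the polar decomposition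
  only through \<open>L_def\<close>, which makes \<open>L\<close> a closed subspace of \<open>H\<close>.\<close>

theorem theorem4p6:
  fixes R :: "'a::chilbert_space \<Rightarrow> 'a"
    and E H L :: "'a set"
    and P VT :: "'a \<Rightarrow> 'a"
    and UT :: "'a \<Rightarrow> nat \<Rightarrow> 'a"
    and l :: complex
  assumes quasinormal: "quasinormal_on UNIV R"
    and injective: "inj R"
    and canonical: "canonical_decomp R E H"
    and modulus: "modulus_on H R P"
    and polar: "polar_part_on H R P VT"
    and L_def: "L = H \<inter> orth_compl (VT ` H)"
    and UT_unitary: "unitary_l2 H L UT"
    and UT_intertwines: "\<forall>h\<in>H. UT (R h) = tensorS P (UT h)"
    and l_in: "l \<in> sigma_ext R"
  shows "Eext_on UNIV R l =
           {X. \<exists>U V W. U \<in> Eext_on E R l \<and> V \<in> Eint_l2 E L R P l \<and> W \<in> Eext_on H R l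
                  \<and> (\<forall>e\<in>E. \<forall>h\<in>H. X (e + h) = U e + V (UT h) + W h)}
       \<and> Eint_l2 E L R P l =
           {V. bop_l2 L E V
               \<and> row_entry V 0 \<in> A_class (cmod l) L E R P
               \<and> (\<forall>n\<ge>1.
                    (\<forall>x\<in>L. row_entry V n ((P ^^ n) x) = (inverse l ^ n) *\<^sub>C (R ^^ n) (row_entry V 0 x))
                  \<and> (\<forall>Y. lin_bdd_on L E Y
                        \<and> (\<forall>x\<in>L. Y ((P ^^ n) x) = (inverse l ^ n) *\<^sub>C (R ^^ n) (row_entry V 0 x))
                        \<longrightarrow> (\<forall>y\<in>L. Y y = row_entry V n y)))}"
proof -
  have R_bounded: "lin_bdd_on UNIV UNIV R"
    using quasinormal by (simp add: quasinormal_on_def op_on_def)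
  have "closed_subspace H"
    using canonical by (simp add: canonical_decomp_def closed_subspace_orth_compl)
  hence "closed_subspace L"
    unfolding L_def by (intro closed_subspace_Int closed_subspace_orth_compl)
  moreover have "l \<noteq> 0" using zero_notin_sigma_ext[OF R_bounded injective] l_in by blast
  ultimately interpret canonical_model R E H L P UT l
    using R_bounded injective canonical modulus L_def UT_unitary UT_intertwines
    by unfold_locales auto
  show ?thesis using Eext_on_UNIV_eq Eint_l2_eq by blast
qed

end
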